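(* Let $\{X_i,i\ge1\}$ be i.i.d. random variables with density $f$, where $f$ is bounded and uniformly continuous on $\mathbb{R}$, and let $K$ be a bounded symmetric probability density on $\mathbb{R}$. For a bandwidth $h=h_n\to0$ set $g_n(X_i,X_j)=K\big(\frac{X_i-X_j}h\big)-E\big[K\big(\frac{X_i-X_j}h\big)\big]$, $g_{1n}(X_i)=E[g_n(X_i,X_j)\mid X_i]$ ($j\ne i$), and $g_{2n}(X_i,X_j)=g_n(X_i,X_j)-g_{1n}(X_i)-g_{1n}(X_j)$. Then, with $c_j=\int K^j(s)\,ds\int f^2(y)\,dy$ for $j=1,2,4$, $E[K((X_1-X_2)/h)]\sim c_1h$, $E[g_{2n}^2(X_1,X_2)]\sim E[K^2((X_1-X_2)/h)]\sim c_2h$, $E[g_{2n}^4(X_1,X_2)]\sim E[K^4((X_1-X_2)/h)]\sim c_4h$. Furthermore $E[g_{1n}^2(X_1)]\sim d_1h^2$ and $E[g_{2n}(X_1,X_3)g_{2n}(X_1,X_4)g_{2n}(X_2,X_3)g_{2n}(X_2,X_4)]\sim d_2h^3$, where $d_1=\int\big[f(x)-\int f^2(y)\,dy\big]^2f(x)\,dx$ and $d_2=\int\int\int K(s)K(t)K(x+s)K(x+t)\,ds\,dt\,dx\int f^4(y)\,dy$.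
   Context: $a_n\sim b_n$ means $a_n/b_n\to1$ as $n\to\infty$; all integrals are over $\mathbb{R}$. *)

theory Defs
  imports "HOL-Probability.Probability" "HOL-Library.Landau_Symbols"
begin

text \<open>E[K((X_i - X_j)/h)], i \<noteq> j; by the i.i.d. assumption this does not depend on i \<noteq> j,
  so we use the pair (X_1, X_2).\<close>
definition EK :: "'a measure \<Rightarrow> (nat \<Rightarrow> 'a \<Rightarrow> real) \<Rightarrow> (real \<Rightarrow> real) \<Rightarrow> real \<Rightarrow> real" where
  "EK M X K h = (\<integral>\<omega>. K ((X 1 \<omega> - X 2 \<omega>) / h) \<partial>M)"

definition gn :: "'a measure \<Rightarrow> (nat \<Rightarrow> 'a \<Rightarrow> real) \<Rightarrow> (real \<Rightarrow> real) \<Rightarrow> real \<Rightarrow> real \<Rightarrow> real \<Rightarrow> real" where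
  "gn M X K h x y = K ((x - y) / h) - EK M X K h"

text \<open>g_{1n}(x) = E[g_n(X_i,X_j) | X_i = x] = \<integral> g_n(x,y) f(y) dy  (j \<noteq> i, X_j independent of X_i
  with density f); this is the canonical version of the conditional expectation.\<close>
definition g1n :: "'a measure \<Rightarrow> (nat \<Rightarrow> 'a \<Rightarrow> real) \<Rightarrow> (real \<Rightarrow> real) \<Rightarrow> (real \<Rightarrow> real) \<Rightarrow> real \<Rightarrow> real \<Rightarrow> real" where
  "g1n M X K f h x = (\<integral>y. gn M X K h x y * f y \<partial>lborel)"

definition g2n :: "'a measure \<Rightarrow> (nat \<Rightarrow> 'a \<Rightarrow> real) \<Rightarrow> (real \<Rightarrow> real) \<Rightarrow> (real \<Rightarrow> real) \<Rightarrow> real \<Rightarrow> real \<Rightarrow> real \<Rightarrow> real" where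
  "g2n M X K f h x y = gn M X K h x y - g1n M X K f h x - g1n M X K f h y"

end

theory Submission
  imports Defs
begin

text \<open>
  The substitution y = x - h s together with independence reduces every moment to integrals
  of the form \<integral> f(x) \<integral> L(s) f(x - h s) ds dx, which tend to \<integral> L \<integral> f^2 by dominated
  convergence, f being bounded and continuous. Since E K((X_1 - X_2)/h) and g_1n are O(h), the
  centred kernel g_2n differs from K((x - y)/h) uniformly by at most 3 h sup f. For the second
  and fourth moments this costs O(h^2) against a main term of exact order h. In the 4-cycle
  product each first-order error term is dominated by a path of three kernel factors, whose
  expectation is O(h^3), so the error is O(h^4); the main term equals
  h^3 \<integral> f(z) \<integral> f(z + h u) (\<integral> K(s) K(u + s) f(z - h s) ds)^2 du dz and tends to
  \<integral> (K * K)^2 \<integral> f^4. Finally g_1n(x) = h (\<integral> K(s) f(x - h s) ds - E K/h), whose bracket tends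
  to f(x) - \<integral> f^2. All limit constants are positive (for d_1 because a continuous density
  cannot take only the two values 0 and \<integral> f^2), so the limits are asymptotic equivalences.
\<close>

lemma continuous_AE_zero_imp_zero:
  fixes g :: "real \<Rightarrow> real"
  assumes "continuous_on UNIV g" "AE x in lborel. g x = 0"
  shows "g x = 0"
proof -
  have "AE x in lebesgue. g x = 0" using assms(2) by (rule AE_completion)
  then show ?thesis
    using mem_closed_if_AE_lebesgue_open[of UNIV "{x. g x = 0}"]
      closed_Collect_eq[OF assms(1) continuous_on_const] by auto
qed

lemma abs_power_diff_le:
  fixes a b r B :: real
  assumes "\<bar>a - b\<bar> \<le> r" "0 \<le> b" "b \<le> B" "2 \<le> j"
  shows "\<bar>a ^ j - b ^ j\<bar> \<le> j * r * (B + r) ^ (j - 2) * (b + r)"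
  \<comment> \<open>One factor b + r is kept: with b = K((X_1 - X_2)/h) its expectation is O(h).\<close>
proof -
  have r: "0 \<le> r" using assms(1) by linarith
  have a: "\<bar>a\<bar> \<le> b + r" using assms(1,2) by linarith
  have summand: "\<bar>b ^ (j - Suc i) * a ^ i\<bar> \<le> (b + r) ^ (j - 1)" if "i < j" for i
  proof -
    have "\<bar>b ^ (j - Suc i) * a ^ i\<bar> \<le> (b + r) ^ (j - Suc i) * (b + r) ^ i"
      unfolding abs_mult power_abs using a assms(2) r
      by (intro mult_mono power_mono) auto
    also have "\<dots> = (b + r) ^ (j - 1)" using that by (simp flip: power_add)
    finally show ?thesis .
  qed
  have "\<bar>a ^ j - b ^ j\<bar> = \<bar>a - b\<bar> * \<bar>\<Sum>i<j. b ^ (j - Suc i) * a ^ i\<bar>"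
    by (simp add: power_diff_sumr2 abs_mult)
  also have "\<dots> \<le> r * (\<Sum>i<j. (b + r) ^ (j - 1))"
  proof (rule mult_mono)
    show "\<bar>\<Sum>i<j. b ^ (j - Suc i) * a ^ i\<bar> \<le> (\<Sum>i<j. (b + r) ^ (j - 1))"
      using summand by (intro order_trans[OF sum_abs sum_mono]) auto
  qed (use assms(1) r in auto)
  also have "\<dots> = j * r * ((b + r) ^ (j - 2) * (b + r))"
    using assms(4) by (simp flip: power_Suc2 add: Suc_diff_Suc numeral_2_eq_2)
  also have "\<dots> \<le> j * r * ((B + r) ^ (j - 2) * (b + r))"
    using assms r by (intro mult_left_mono mult_right_mono power_mono) auto
  finally show ?thesis by (simp add: mult.assoc)
qed

lemma abs_prod4_diff_le:
  fixes a1 a2 a3 a4 b1 b2 b3 b4 r L1 L2 L3 L4 :: real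
  assumes d: "\<bar>a1 - b1\<bar> \<le> r" "\<bar>a2 - b2\<bar> \<le> r" "\<bar>a3 - b3\<bar> \<le> r" "\<bar>a4 - b4\<bar> \<le> r"
    and a: "\<bar>a2\<bar> \<le> L2" "\<bar>a3\<bar> \<le> L3" "\<bar>a4\<bar> \<le> L4"
    and b: "\<bar>b1\<bar> \<le> L1" "\<bar>b2\<bar> \<le> L2" "\<bar>b3\<bar> \<le> L3"
  shows "\<bar>a1 * a2 * a3 * a4 - b1 * b2 * b3 * b4\<bar>
    \<le> r * (L2 * L3 * L4 + L1 * L3 * L4 + L1 * L2 * L4 + L1 * L2 * L3)"
proof -
  have "a1 * a2 * a3 * a4 - b1 * b2 * b3 * b4 =
    (a1 - b1) * a2 * a3 * a4 + b1 * (a2 - b2) * a3 * a4 + b1 * b2 * (a3 - b3) * a4 + b1 * b2 * b3 * (a4 - b4)"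
    by (simp add: algebra_simps)
  also have "\<bar>\<dots>\<bar> \<le> r * L2 * L3 * L4 + L1 * r * L3 * L4 + L1 * L2 * r * L4 + L1 * L2 * L3 * r"
    using assms by (intro abs_triangle_ineq[THEN order_trans] add_mono; simp add: abs_mult mult_mono')+
  finally show ?thesis by (simp add: algebra_simps)
qed

lemma asymp_equiv_if_diff_le:
  fixes a b p e :: "nat \<Rightarrow> real"
  assumes diff: "\<And>n. \<bar>a n - b n\<bar> \<le> p n * e n" and e: "e \<longlonglongrightarrow> 0"
    and b: "(\<lambda>n. b n / p n) \<longlonglongrightarrow> c" "c \<noteq> 0" and p: "\<And>n. p n > 0"
  shows "a \<sim>[sequentially] b"
proof (rule asymp_equivI')
  have "(\<lambda>n. (a n - b n) / p n) \<longlonglongrightarrow> 0"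
  proof (rule Lim_null_comparison[OF _ e])
    show "\<forall>\<^sub>F n in sequentially. norm ((a n - b n) / p n) \<le> e n"
      using diff p by (intro always_eventually allI) (simp add: abs_div abs_of_pos pos_divide_le_eq mult.commute)
  qed
  then have "(\<lambda>n. (a n - b n) / p n / (b n / p n) + 1) \<longlonglongrightarrow> 0 / c + 1"
    by (intro tendsto_intros b)
  moreover have "\<forall>\<^sub>F n in sequentially. (a n - b n) / p n / (b n / p n) + 1 = a n / b n"
    using tendsto_imp_eventually_ne[OF b]
  proof (rule eventually_mono)
    fix n assume "b n / p n \<noteq> 0"
    then show "(a n - b n) / p n / (b n / p n) + 1 = a n / b n" by (simp add: field_simps)
  qed
  ultimately show "(\<lambda>n. a n / b n) \<longlonglongrightarrow> 1"
    by (simp add: tendsto_cong)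
qed

lemma integral_power_pos:
  fixes g :: "real \<Rightarrow> real"
  assumes "integrable lborel (\<lambda>x. g x ^ j)" "\<And>x. 0 \<le> g x" "j > 0" "(\<integral>x. g x \<partial>lborel) \<noteq> 0"
  shows "(\<integral>x. g x ^ j \<partial>lborel) > 0"
proof -
  have "(\<integral>x. g x ^ j \<partial>lborel) \<noteq> 0"
  proof
    assume "(\<integral>x. g x ^ j \<partial>lborel) = 0"
    then have "AE x in lborel. g x ^ j = 0"
      using integral_nonneg_eq_0_iff_AE[OF assms(1)] assms(2) by simp
    then have "AE x in lborel. g x = 0" by simp
    then show False using assms(4) integral_eq_zero_AE by blast
  qed
  moreover have "(\<integral>x. g x ^ j \<partial>lborel) \<ge> 0" using assms(2) by simp
  ultimately show ?thesis by linarith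
qed

lemma integral_scaled_kernel:
  fixes g L :: "real \<Rightarrow> real"
  assumes "h > 0"
  shows "(\<integral>y. g y * L ((x - y) / h) \<partial>lborel) = h * (\<integral>s. L s * g (x - h * s) \<partial>lborel)"
proof -
  have "(\<integral>y. g y * L ((x - y) / h) \<partial>lborel) =
    \<bar>- h\<bar> *\<^sub>R (\<integral>s. g (x + (- h) * s) * L ((x - (x + (- h) * s)) / h) \<partial>lborel)"
    using assms by (intro lborel_integral_real_affine) auto
  also have "(\<lambda>s. g (x + (- h) * s) * L ((x - (x + (- h) * s)) / h)) = (\<lambda>s. L s * g (x - h * s))"
    using assms by (auto simp: fun_eq_iff)
  finally show ?thesis using assms by simp
qed

locale iid_kernel =
  fixes M :: "'a measure" and X :: "nat \<Rightarrow> 'a \<Rightarrow> real"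
    and f K :: "real \<Rightarrow> real"
  assumes P: "prob_space M"
    and indep: "prob_space.indep_vars M (\<lambda>_. borel) X {1..}"
    and distr: "\<And>i. i \<ge> 1 \<Longrightarrow> distributed M lborel (X i) (\<lambda>x. ennreal (f x))"
    and f_nonneg: "\<And>x. f x \<ge> 0"
    and f_bdd: "bounded (range f)"
    and f_uc: "uniformly_continuous_on UNIV f"
    and K_meas [measurable]: "K \<in> borel_measurable borel"
    and K_nonneg: "\<And>x. K x \<ge> 0"
    and K_bdd: "bounded (range K)"
    and K_sym: "\<And>x. K (- x) = K x"
    and K_int: "integrable lborel K"
    and K_one: "(\<integral>x. K x \<partial>lborel) = 1"
begin

sublocale prob_space M by (rule P)

definition law :: "real measure" where "law = density lborel (\<lambda>x. ennreal (f x))"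

definition f_sup :: real where "f_sup = (SUP x. f x)"

definition K_sup :: real where "K_sup = (SUP x. K x)"

lemma f_cont: "continuous_on UNIV f"
  using f_uc uniformly_continuous_imp_continuous by blast

lemma f_meas [measurable]: "f \<in> borel_measurable borel"
  by (rule borel_measurable_continuous_onI[OF f_cont])

lemma X_meas [measurable]: "i \<ge> 1 \<Longrightarrow> X i \<in> borel_measurable M"
  using distr distributed_measurable by (metis measurable_lborel1)

lemma distr_X: "i \<ge> 1 \<Longrightarrow> distr M borel (X i) = law"
proof -
  assume "i \<ge> 1"
  have "distr M borel (X i) = distr M lborel (X i)"
    by (rule distr_cong) auto
  then show ?thesis
    using distr[OF \<open>i \<ge> 1\<close>] unfolding law_def by (simp add: distributed_distr_eq_density)
qed

lemma prob_space_law: "prob_space law"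
  using distr_X[of 1] prob_space_distr[of "X 1" borel] X_meas[of 1] by simp

lemma emeasure_law_UNIV [simp]: "emeasure law UNIV = 1"
  using prob_space.emeasure_space_1[OF prob_space_law] by (simp add: law_def)

lemma sets_law [simp, measurable_cong]: "sets law = sets borel"
  by (simp add: law_def)

lemma space_law [simp]: "space law = UNIV"
  by (simp add: law_def)

lemma f_le_sup: "f x \<le> f_sup"
  unfolding f_sup_def using f_bdd by (intro cSUP_upper bounded_imp_bdd_above) auto

lemma K_le_sup: "K x \<le> K_sup"
  unfolding K_sup_def using K_bdd by (intro cSUP_upper bounded_imp_bdd_above) auto

lemma f_sup_nonneg: "0 \<le> f_sup"
  using f_nonneg[of 0] f_le_sup[of 0] by linarith

lemma K_sup_nonneg: "0 \<le> K_sup"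
  using K_nonneg[of 0] K_le_sup[of 0] by linarith

lemma nn_integral_f: "(\<integral>\<^sup>+x. ennreal (f x) \<partial>lborel) = 1"
proof -
  interpret law: prob_space law by (rule prob_space_law)
  show ?thesis using law.emeasure_space_1 by (simp add: law_def emeasure_density)
qed

lemma integrable_f: "integrable lborel f"
  using nn_integral_f f_nonneg by (intro integrableI_nonneg) auto

lemma integral_f: "(\<integral>x. f x \<partial>lborel) = 1"
  using nn_integral_f f_nonneg integrable_f by (subst (asm) nn_integral_eq_integral) auto

lemma integrable_f_mult:
  assumes [measurable]: "g \<in> borel_measurable borel" and "\<And>x. \<bar>g x\<bar> \<le> B"
  shows "integrable lborel (\<lambda>x. f x * g x)"
proof (rule Bochner_Integration.integrable_bound)
  show "integrable lborel (\<lambda>x. B * f x)" using integrable_f by simp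
  have "norm (f x * g x) \<le> norm (B * f x)" for x
  proof -
    have "\<bar>f x * g x\<bar> = f x * \<bar>g x\<bar>" using f_nonneg[of x] by (simp add: abs_mult)
    also have "\<dots> \<le> f x * B" using assms(2)[of x] f_nonneg[of x] by (intro mult_left_mono) auto
    finally show ?thesis by (simp add: mult.commute)
  qed
  then show "AE x in lborel. norm (f x * g x) \<le> norm (B * f x)" by simp
qed measurable

lemma integral_f_mult_bounds:
  assumes [measurable]: "g \<in> borel_measurable borel" and "\<And>x. 0 \<le> g x" "\<And>x. g x \<le> B"
  shows "0 \<le> (\<integral>x. f x * g x \<partial>lborel)" "(\<integral>x. f x * g x \<partial>lborel) \<le> B"
proof -
  have gB: "\<bar>g x\<bar> \<le> B" for x using assms(2,3)[of x] by auto
  show "0 \<le> (\<integral>x. f x * g x \<partial>lborel)" using assms(2) f_nonneg by simp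
  have "(\<integral>x. f x * g x \<partial>lborel) \<le> (\<integral>x. B * f x \<partial>lborel)"
    using integrable_f_mult[OF assms(1) gB] integrable_f assms(3) f_nonneg
    by (intro integral_mono) (auto simp: mult.commute[of B] intro: mult_left_mono)
  then show "(\<integral>x. f x * g x \<partial>lborel) \<le> B" using integral_f by simp
qed

lemma nn_integral_law:
  assumes [measurable]: "g \<in> borel_measurable borel" and "\<And>x. 0 \<le> g x" "\<And>x. g x \<le> B"
  shows "(\<integral>\<^sup>+x. ennreal (g x) \<partial>law) = ennreal (\<integral>x. f x * g x \<partial>lborel)"
proof -
  have "(\<integral>\<^sup>+x. ennreal (g x) \<partial>law) = (\<integral>\<^sup>+x. ennreal (f x * g x) \<partial>lborel)"
    unfolding law_def using assms(2) f_nonneg by (subst nn_integral_density) (auto simp: ennreal_mult)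
  also have "\<dots> = ennreal (\<integral>x. f x * g x \<partial>lborel)"
    using assms(2,3) f_nonneg
    by (intro nn_integral_eq_integral integrable_f_mult[where B=B]) (auto simp: abs_le_iff intro: order_trans)
  finally show ?thesis .
qed

lemma nn_integral_X4:
  fixes \<psi> :: "real \<times> real \<times> real \<times> real \<Rightarrow> ennreal"
  assumes abcd: "a \<ge> 1" "b \<ge> 1" "c \<ge> 1" "d \<ge> 1" "distinct [a, b, c, d]"
    and [measurable]: "\<psi> \<in> borel_measurable (borel \<Otimes>\<^sub>M borel \<Otimes>\<^sub>M borel \<Otimes>\<^sub>M borel)"
  shows "(\<integral>\<^sup>+\<omega>. \<psi> (X a \<omega>, X b \<omega>, X c \<omega>, X d \<omega>) \<partial>M) =
    (\<integral>\<^sup>+z. \<integral>\<^sup>+y. \<integral>\<^sup>+x. \<integral>\<^sup>+w. \<psi> (w, x, y, z) \<partial>law \<partial>law \<partial>law \<partial>law)"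
proof -
  define I where "I = {a, b, c, d}"
  have I1: "i \<in> I \<Longrightarrow> i \<ge> 1" for i using abcd by (auto simp: I_def)
  have rv: "i \<in> I \<Longrightarrow> random_variable borel (X i)" for i using I1 X_meas by auto
  have ind: "indep_vars (\<lambda>_. borel) X I"
    using indep by (rule indep_vars_subset) (use I1 in auto)
  have "distr M (\<Pi>\<^sub>M i\<in>I. borel) (\<lambda>\<omega>. \<lambda>i\<in>I. X i \<omega>) = (\<Pi>\<^sub>M i\<in>I. distr M borel (X i))"
    using indep_vars_iff_distr_eq_PiM'[where I=I and M'="\<lambda>_. borel" and X=X] ind rv
    by (auto simp: I_def)
  also have "\<dots> = (\<Pi>\<^sub>M i\<in>I. law)"
    by (rule PiM_cong) (use distr_X I1 in auto)
  finally have joint: "distr M (\<Pi>\<^sub>M i\<in>I. borel) (\<lambda>\<omega>. \<lambda>i\<in>I. X i \<omega>) = (\<Pi>\<^sub>M i\<in>I. law)" .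
  interpret law: prob_space law by (rule prob_space_law)
  interpret product_sigma_finite "\<lambda>_. law" by unfold_locales
  have "(\<integral>\<^sup>+\<omega>. \<psi> (X a \<omega>, X b \<omega>, X c \<omega>, X d \<omega>) \<partial>M) =
      (\<integral>\<^sup>+\<omega>. \<psi> ((\<lambda>i\<in>I. X i \<omega>) a, (\<lambda>i\<in>I. X i \<omega>) b, (\<lambda>i\<in>I. X i \<omega>) c, (\<lambda>i\<in>I. X i \<omega>) d) \<partial>M)"
    by (simp add: I_def)
  also have "\<dots> = (\<integral>\<^sup>+x. \<psi> (x a, x b, x c, x d) \<partial>distr M (\<Pi>\<^sub>M i\<in>I. borel) (\<lambda>\<omega>. \<lambda>i\<in>I. X i \<omega>))"
    using rv by (intro nn_integral_distr[symmetric] measurable_restrict) (auto simp: I_def)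
  also have "\<dots> = (\<integral>\<^sup>+x. \<psi> (x a, x b, x c, x d) \<partial>(\<Pi>\<^sub>M i\<in>I. law))"
    by (simp add: joint)
  also have "\<dots> = (\<integral>\<^sup>+x. \<integral>\<^sup>+w. \<psi> (w, x b, x c, x d) \<partial>law \<partial>(\<Pi>\<^sub>M i\<in>{b, c, d}. law))"
    using abcd(5) unfolding I_def by (subst product_nn_integral_insert) auto
  also have "\<dots> = (\<integral>\<^sup>+x. \<integral>\<^sup>+y. \<integral>\<^sup>+w. \<psi> (w, y, x c, x d) \<partial>law \<partial>law \<partial>(\<Pi>\<^sub>M i\<in>{c, d}. law))"
    using abcd(5) by (subst product_nn_integral_insert) auto
  also have "\<dots> = (\<integral>\<^sup>+x. \<integral>\<^sup>+y. \<integral>\<^sup>+x'. \<integral>\<^sup>+w. \<psi> (w, x', y, x d) \<partial>law \<partial>law \<partial>law \<partial>(\<Pi>\<^sub>M i\<in>{d}. law))"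
    using abcd(5) by (subst product_nn_integral_insert) auto
  also have "\<dots> = (\<integral>\<^sup>+z. \<integral>\<^sup>+y. \<integral>\<^sup>+x. \<integral>\<^sup>+w. \<psi> (w, x, y, z) \<partial>law \<partial>law \<partial>law \<partial>law)"
    by (subst product_nn_integral_singleton) auto
  finally show ?thesis .
qed

lemma integral_X1:
  assumes [measurable]: "\<phi> \<in> borel_measurable borel"
  shows "(\<integral>\<omega>. \<phi> (X 1 \<omega>) \<partial>M) = (\<integral>x. f x * \<phi> x \<partial>lborel)"
proof -
  have "(\<integral>\<omega>. \<phi> (X 1 \<omega>) \<partial>M) = (\<integral>x. \<phi> x \<partial>distr M borel (X 1))"
    by (rule integral_distr[symmetric]) auto
  also have "\<dots> = (\<integral>x. \<phi> x \<partial>law)" using distr_X[of 1] by simp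
  also have "\<dots> = (\<integral>x. f x * \<phi> x \<partial>lborel)"
    unfolding law_def by (subst integral_density) (auto simp: f_nonneg)
  finally show ?thesis .
qed

lemma integral_X12:
  fixes L :: "real \<times> real \<Rightarrow> real"
  assumes [measurable]: "L \<in> borel_measurable (borel \<Otimes>\<^sub>M borel)"
    and L_nonneg: "\<And>p. 0 \<le> L p" and L_le: "\<And>p. L p \<le> B"
  shows "(\<integral>\<omega>. L (X 1 \<omega>, X 2 \<omega>) \<partial>M) = (\<integral>x. f x * (\<integral>w. f w * L (w, x) \<partial>lborel) \<partial>lborel)"
proof -
  define J where "J x = (\<integral>w. f w * L (w, x) \<partial>lborel)" for x
  have [measurable]: "J \<in> borel_measurable borel" unfolding J_def by measurable
  have J: "0 \<le> J x" "J x \<le> B" for x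
    unfolding J_def using integral_f_mult_bounds[of "\<lambda>w. L (w, x)" B] L_nonneg L_le by auto
  have "(\<integral>\<^sup>+\<omega>. ennreal (L (X 1 \<omega>, X 2 \<omega>)) \<partial>M) =
     (\<integral>\<^sup>+z. \<integral>\<^sup>+y. \<integral>\<^sup>+x. \<integral>\<^sup>+w. ennreal (L (w, x)) \<partial>law \<partial>law \<partial>law \<partial>law)"
    using nn_integral_X4[of 1 2 3 4 "\<lambda>(w, x, y, z). ennreal (L (w, x))"] by (simp add: case_prod_beta')
  also have "\<dots> = (\<integral>\<^sup>+z. \<integral>\<^sup>+y. \<integral>\<^sup>+x. ennreal (J x) \<partial>law \<partial>law \<partial>law)"
    unfolding J_def using L_nonneg L_le by (intro nn_integral_cong nn_integral_law) auto
  also have "\<dots> = ennreal (\<integral>x. f x * J x \<partial>lborel)"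
    using J by (simp add: nn_integral_law[where B=B])
  finally show ?thesis
    using L_nonneg integral_f_mult_bounds(1)[of J, OF _ J(1) J(2)]
    by (subst integral_eq_nn_integral) (auto simp: J_def)
qed

lemma abs_mult_f_le: "\<bar>c * f y\<bar> \<le> f_sup * \<bar>c\<bar>"
  using f_le_sup[of y] f_nonneg[of y] by (simp add: abs_mult) (metis abs_ge_zero mult.commute mult_left_mono)

lemma abs_integral_smoothed_f_le:
  assumes "integrable lborel L"
  shows "\<bar>\<integral>s. L s * f (x - h * s) \<partial>lborel\<bar> \<le> f_sup * (\<integral>s. \<bar>L s\<bar> \<partial>lborel)"
proof -
  have [measurable]: "L \<in> borel_measurable borel" using assms by auto
  have int: "integrable lborel (\<lambda>s. f_sup * \<bar>L s\<bar>)" using assms by auto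
  have "\<bar>\<integral>s. L s * f (x - h * s) \<partial>lborel\<bar> \<le> (\<integral>s. \<bar>L s * f (x - h * s)\<bar> \<partial>lborel)"
    by (rule integral_abs_bound)
  also have "\<dots> \<le> (\<integral>s. f_sup * \<bar>L s\<bar> \<partial>lborel)"
  proof (rule integral_mono[OF _ int abs_mult_f_le])
    show "integrable lborel (\<lambda>s. \<bar>L s * f (x - h * s)\<bar>)"
    proof (rule Bochner_Integration.integrable_bound[OF int])
      show "AE s in lborel. norm \<bar>L s * f (x - h * s)\<bar> \<le> norm (f_sup * \<bar>L s\<bar>)"
        using abs_mult_f_le f_sup_nonneg by simp
    qed measurable
  qed
  finally show ?thesis by simp
qed

lemma tendsto_integral_smoothed_f:
  assumes "integrable lborel L" and h: "h \<longlonglongrightarrow> 0"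
  shows "(\<lambda>n. \<integral>s. L s * f (x - h n * s) \<partial>lborel) \<longlonglongrightarrow> (\<integral>s. L s * f x \<partial>lborel)"
proof (rule integral_dominated_convergence[where w="\<lambda>s. f_sup * \<bar>L s\<bar>"])
  have [measurable]: "L \<in> borel_measurable borel" using assms by auto
  show "(\<lambda>s. L s * f x) \<in> borel_measurable lborel" by measurable
  show "(\<lambda>s. L s * f (x - h n * s)) \<in> borel_measurable lborel" for n by measurable
  show "integrable lborel (\<lambda>s. f_sup * \<bar>L s\<bar>)" using assms by auto
  show "AE s in lborel. (\<lambda>n. L s * f (x - h n * s)) \<longlonglongrightarrow> L s * f x"
  proof (intro AE_I2 tendsto_mult tendsto_const)
    fix s
    have "(\<lambda>n. x - h n * s) \<longlonglongrightarrow> x - 0 * s" by (intro tendsto_intros h)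
    then show "(\<lambda>n. f (x - h n * s)) \<longlonglongrightarrow> f x"
      using f_cont by (auto intro: isCont_tendsto_compose simp: continuous_on_eq_continuous_at)
  qed
  show "AE s in lborel. norm (L s * f (x - h n * s)) \<le> f_sup * \<bar>L s\<bar>" for n
    using abs_mult_f_le by simp
qed

lemma tendsto_integral_f_smoothed_f:
  assumes L: "integrable lborel L" and h: "h \<longlonglongrightarrow> 0"
  shows "(\<lambda>n. \<integral>x. f x * (\<integral>s. L s * f (x - h n * s) \<partial>lborel) \<partial>lborel)
     \<longlonglongrightarrow> (\<integral>s. L s \<partial>lborel) * (\<integral>x. f x ^ 2 \<partial>lborel)"
proof -
  have [measurable]: "L \<in> borel_measurable borel" using borel_measurable_integrable[OF L] by simp
  have "(\<lambda>n. \<integral>x. f x * (\<integral>s. L s * f (x - h n * s) \<partial>lborel) \<partial>lborel)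
     \<longlonglongrightarrow> (\<integral>x. f x * (\<integral>s. L s * f x \<partial>lborel) \<partial>lborel)"
  proof (rule integral_dominated_convergence[where w="\<lambda>x. f x * (f_sup * (\<integral>s. \<bar>L s\<bar> \<partial>lborel))"])
    show "(\<lambda>x. f x * (\<integral>s. L s * f x \<partial>lborel)) \<in> borel_measurable lborel"
      by measurable
    show "(\<lambda>x. f x * (\<integral>s. L s * f (x - h n * s) \<partial>lborel)) \<in> borel_measurable lborel" for n
      by measurable
    show "integrable lborel (\<lambda>x. f x * (f_sup * (\<integral>s. \<bar>L s\<bar> \<partial>lborel)))"
      using integrable_f by auto
    show "AE x in lborel. (\<lambda>n. f x * (\<integral>s. L s * f (x - h n * s) \<partial>lborel)) \<longlonglongrightarrow> f x * (\<integral>s. L s * f x \<partial>lborel)"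
      by (intro AE_I2 tendsto_mult tendsto_const tendsto_integral_smoothed_f L h)
    show "AE x in lborel. norm (f x * (\<integral>s. L s * f (x - h n * s) \<partial>lborel))
        \<le> f x * (f_sup * (\<integral>s. \<bar>L s\<bar> \<partial>lborel))" for n
      using abs_integral_smoothed_f_le[OF L] f_nonneg by (auto simp: abs_mult intro!: mult_left_mono)
  qed
  also have "(\<lambda>x. f x * (\<integral>s. L s * f x \<partial>lborel)) = (\<lambda>x. (\<integral>s. L s \<partial>lborel) * f x ^ 2)"
    by (simp add: fun_eq_iff power2_eq_square)
  also have "(\<integral>x. (\<integral>s. L s \<partial>lborel) * f x ^ 2 \<partial>lborel) = (\<integral>s. L s \<partial>lborel) * (\<integral>x. f x ^ 2 \<partial>lborel)"
    by (rule integral_mult_right_zero)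
  finally show ?thesis .
qed

lemma integrable_K_power:
  assumes "j > 0"
  shows "integrable lborel (\<lambda>x. K x ^ j)"
proof (rule Bochner_Integration.integrable_bound[where f="\<lambda>x. K_sup ^ (j - 1) * K x"])
  show "AE x in lborel. norm (K x ^ j) \<le> norm (K_sup ^ (j - 1) * K x)"
  proof (rule AE_I2)
    fix x
    have "K x ^ j = K x ^ (j - 1) * K x" using assms by (simp flip: power_Suc2)
    also have "\<dots> \<le> K_sup ^ (j - 1) * K x"
      using K_nonneg[of x] K_le_sup[of x] by (intro mult_right_mono power_mono) auto
    finally show "norm (K x ^ j) \<le> norm (K_sup ^ (j - 1) * K x)"
      using K_nonneg[of x] K_sup_nonneg by simp
  qed
qed (use K_int in simp_all)

lemma integrable_f_power:
  assumes "j > 0"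
  shows "integrable lborel (\<lambda>x. f x ^ j)"
proof (rule Bochner_Integration.integrable_bound[where f="\<lambda>x. f_sup ^ (j - 1) * f x"])
  show "AE x in lborel. norm (f x ^ j) \<le> norm (f_sup ^ (j - 1) * f x)"
  proof (rule AE_I2)
    fix x
    have "f x ^ j = f x ^ (j - 1) * f x" using assms by (simp flip: power_Suc2)
    also have "\<dots> \<le> f_sup ^ (j - 1) * f x"
      using f_nonneg[of x] f_le_sup[of x] by (intro mult_right_mono power_mono) auto
    finally show "norm (f x ^ j) \<le> norm (f_sup ^ (j - 1) * f x)"
      using f_nonneg[of x] f_sup_nonneg by simp
  qed
qed (use integrable_f in simp_all)

lemma integral_K_power_pos: "j > 0 \<Longrightarrow> (\<integral>x. K x ^ j \<partial>lborel) > 0"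
  using integral_power_pos[OF integrable_K_power] K_nonneg K_one by simp

lemma integral_f_power_pos: "j > 0 \<Longrightarrow> (\<integral>x. f x ^ j \<partial>lborel) > 0"
  using integral_power_pos[OF integrable_f_power] f_nonneg integral_f by simp

lemma K_diff_commute: "K ((x - y) / h) = K ((y - x) / h)"
  using K_sym[of "(y - x) / h"] by (simp add: minus_divide_left)

lemma expectation_K_power:
  assumes "h > 0"
  shows "(\<integral>\<omega>. K ((X 1 \<omega> - X 2 \<omega>) / h) ^ j \<partial>M)
    = h * (\<integral>x. f x * (\<integral>s. K s ^ j * f (x - h * s) \<partial>lborel) \<partial>lborel)"
proof -
  have "(\<integral>\<omega>. K ((X 1 \<omega> - X 2 \<omega>) / h) ^ j \<partial>M)
      = (\<integral>x. f x * (\<integral>w. f w * K ((x - w) / h) ^ j \<partial>lborel) \<partial>lborel)"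
    using integral_X12[of "\<lambda>p. K ((fst p - snd p) / h) ^ j" "K_sup ^ j"] K_nonneg K_le_sup
    by (simp add: power_mono K_diff_commute[of _ _ h])
  also have "\<dots> = (\<integral>x. f x * (h * (\<integral>s. K s ^ j * f (x - h * s) \<partial>lborel)) \<partial>lborel)"
    using integral_scaled_kernel[OF assms, of f "\<lambda>z. K z ^ j"] by simp
  also have "\<dots> = h * (\<integral>x. f x * (\<integral>s. K s ^ j * f (x - h * s) \<partial>lborel) \<partial>lborel)"
    by (simp add: mult.left_commute)
  finally show ?thesis .
qed

lemma tendsto_expectation_K_power_div:
  assumes "j > 0" and h: "\<And>n. h n > 0" "h \<longlonglongrightarrow> 0"
  shows "(\<lambda>n. (\<integral>\<omega>. K ((X 1 \<omega> - X 2 \<omega>) / h n) ^ j \<partial>M) / h n)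
     \<longlonglongrightarrow> (\<integral>s. K s ^ j \<partial>lborel) * (\<integral>x. f x ^ 2 \<partial>lborel)"
proof -
  have "(\<integral>\<omega>. K ((X 1 \<omega> - X 2 \<omega>) / h n) ^ j \<partial>M) / h n
      = (\<integral>x. f x * (\<integral>s. K s ^ j * f (x - h n * s) \<partial>lborel) \<partial>lborel)" for n
    using expectation_K_power[OF h(1)[of n], of j] h(1)[of n] by simp
  then show ?thesis
    using tendsto_integral_f_smoothed_f[OF integrable_K_power[OF assms(1)] h(2)] by simp
qed

lemma expectation_K_power_asymp:
  assumes "j > 0" and h: "\<And>n. h n > 0" "h \<longlonglongrightarrow> 0"
  shows "(\<lambda>n. \<integral>\<omega>. K ((X 1 \<omega> - X 2 \<omega>) / h n) ^ j \<partial>M) \<sim>[sequentially]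
     (\<lambda>n. ((\<integral>s. K s ^ j \<partial>lborel) * (\<integral>x. f x ^ 2 \<partial>lborel)) * h n)"
proof (rule asymp_equivI'_const)
  show "(\<integral>s. K s ^ j \<partial>lborel) * (\<integral>x. f x ^ 2 \<partial>lborel) \<noteq> 0"
    using integral_K_power_pos[OF assms(1)] integral_f_power_pos[of 2] by simp
qed (rule tendsto_expectation_K_power_div[OF assms])

definition smoothed_f :: "real \<Rightarrow> real \<Rightarrow> real" where
  "smoothed_f h x = (\<integral>s. K s * f (x - h * s) \<partial>lborel)"

lemma smoothed_f_meas [measurable]: "smoothed_f h \<in> borel_measurable borel"
  unfolding smoothed_f_def by measurable

lemma smoothed_f_nonneg: "0 \<le> smoothed_f h x"
  unfolding smoothed_f_def using K_nonneg f_nonneg by simp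

lemma smoothed_f_le: "smoothed_f h x \<le> f_sup"
  using abs_integral_smoothed_f_le[OF K_int, of x h] K_nonneg K_one unfolding smoothed_f_def by simp

lemma tendsto_smoothed_f: "h \<longlonglongrightarrow> 0 \<Longrightarrow> (\<lambda>n. smoothed_f (h n) x) \<longlonglongrightarrow> f x"
  using tendsto_integral_smoothed_f[OF K_int, of h x] K_one unfolding smoothed_f_def by simp

lemma integral_f_K_scaled: "h > 0 \<Longrightarrow> (\<integral>y. f y * K ((x - y) / h) \<partial>lborel) = h * smoothed_f h x"
  using integral_scaled_kernel[of h f K x] unfolding smoothed_f_def by simp

lemma EK_eq: "h > 0 \<Longrightarrow> EK M X K h = h * (\<integral>x. f x * smoothed_f h x \<partial>lborel)"
  using expectation_K_power[of h 1] unfolding EK_def smoothed_f_def by simp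

lemma EK_nonneg: "h > 0 \<Longrightarrow> 0 \<le> EK M X K h"
  using EK_eq integral_f_mult_bounds(1)[OF smoothed_f_meas smoothed_f_nonneg smoothed_f_le] by simp

lemma EK_le: "h > 0 \<Longrightarrow> EK M X K h \<le> h * f_sup"
  using EK_eq integral_f_mult_bounds(2)[OF smoothed_f_meas smoothed_f_nonneg smoothed_f_le] by simp

lemma g1n_eq:
  assumes "h > 0"
  shows "g1n M X K f h x = h * smoothed_f h x - EK M X K h"
proof -
  have "g1n M X K f h x = (\<integral>y. f y * K ((x - y) / h) - EK M X K h * f y \<partial>lborel)"
    unfolding g1n_def gn_def by (rule Bochner_Integration.integral_cong) (auto simp: algebra_simps)
  also have "\<dots> = (\<integral>y. f y * K ((x - y) / h) \<partial>lborel) - EK M X K h * (\<integral>y. f y \<partial>lborel)"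
    using K_nonneg K_le_sup integrable_f
    by (subst Bochner_Integration.integral_diff) (auto intro!: integrable_f_mult[where B=K_sup])
  finally show ?thesis using integral_f_K_scaled[OF assms] integral_f by simp
qed

lemma g1n_meas [measurable]:
  assumes "h > 0"
  shows "g1n M X K f h \<in> borel_measurable borel"
proof -
  have "g1n M X K f h = (\<lambda>x. h * smoothed_f h x - EK M X K h)" using g1n_eq[OF assms] by auto
  then show ?thesis by simp
qed

lemma abs_g1n_le:
  assumes "h > 0"
  shows "\<bar>g1n M X K f h x\<bar> \<le> h * f_sup"
proof -
  have "0 \<le> h * smoothed_f h x" "h * smoothed_f h x \<le> h * f_sup"
    using assms smoothed_f_nonneg[of h x] smoothed_f_le[of h x] by auto
  then show ?thesis using g1n_eq[OF assms] EK_nonneg[OF assms] EK_le[OF assms] by (simp add: abs_le_iff)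
qed

lemma g2n_meas [measurable]:
  "(\<lambda>p. g2n M X K f h (fst p) (snd p)) \<in> borel_measurable (borel \<Otimes>\<^sub>M borel)"
  unfolding g2n_def gn_def g1n_def by measurable

lemma abs_g2n_diff_K_le: "h > 0 \<Longrightarrow> \<bar>g2n M X K f h x y - K ((x - y) / h)\<bar> \<le> 3 * h * f_sup"
  using EK_nonneg[of h] EK_le[of h] abs_g1n_le[of h x] abs_g1n_le[of h y]
  unfolding g2n_def gn_def by (auto simp: abs_le_iff)

lemma integral_sq_diff_f_pos: "(\<integral>x. (f x - m)\<^sup>2 * f x \<partial>lborel) > 0"
proof -
  define g where "g x = (f x - m)\<^sup>2 * f x" for x
  have g_cont: "continuous_on UNIV g" unfolding g_def using f_cont by (intro continuous_intros)
  have [measurable]: "g \<in> borel_measurable borel" by (rule borel_measurable_continuous_onI[OF g_cont])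
  have g_nonneg: "0 \<le> g x" for x unfolding g_def using f_nonneg by auto
  have "integrable lborel (\<lambda>x. f x * (f x - m)\<^sup>2)"
  proof (rule integrable_f_mult[where B="(f_sup + \<bar>m\<bar>)\<^sup>2"])
    fix x
    have "\<bar>f x - m\<bar> \<le> f_sup + \<bar>m\<bar>" using f_nonneg[of x] f_le_sup[of x] by linarith
    then show "\<bar>(f x - m)\<^sup>2\<bar> \<le> (f_sup + \<bar>m\<bar>)\<^sup>2"
      by (metis abs_ge_zero abs_power2 power2_abs power_mono)
  qed measurable
  then have g_int: "integrable lborel g" unfolding g_def by (simp add: mult.commute)
  have "(\<integral>x. g x \<partial>lborel) \<noteq> 0"
  proof
    assume "(\<integral>x. g x \<partial>lborel) = 0"
    then have "AE x in lborel. g x = 0"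
      using integral_nonneg_eq_0_iff_AE[OF g_int AE_I2[OF g_nonneg]] by simp
    then have "g x = 0" for x by (rule continuous_AE_zero_imp_zero[OF g_cont])
    then have "range f \<subseteq> {0, m}" unfolding g_def by auto
    then have "f constant_on UNIV"
      using continuous_finite_range_constant[OF connected_UNIV f_cont] finite_subset by auto
    then obtain c where c: "f = (\<lambda>_. c)" by (auto simp: constant_on_def fun_eq_iff)
    then have "c = 0"
      using integrable_f by (auto simp: integrable_iff_bounded ennreal_mult_less_top)
    then show False using integral_f c by simp
  qed
  moreover have "(\<integral>x. g x \<partial>lborel) \<ge> 0" using g_nonneg by simp
  ultimately show ?thesis unfolding g_def by linarith
qed

lemma tendsto_EK_div:
  assumes "\<And>n. h n > 0" "h \<longlonglongrightarrow> 0"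
  shows "(\<lambda>n. EK M X K (h n) / h n) \<longlonglongrightarrow> (\<integral>x. f x ^ 2 \<partial>lborel)"
  using tendsto_expectation_K_power_div[of 1 h, OF _ assms] K_one unfolding EK_def by simp

lemma second_moment_g1n_eq:
  assumes h: "h > 0"
  shows "(\<integral>\<omega>. (g1n M X K f h (X 1 \<omega>))\<^sup>2 \<partial>M)
    = h\<^sup>2 * (\<integral>x. f x * (smoothed_f h x - EK M X K h / h)\<^sup>2 \<partial>lborel)"
proof -
  have "(\<integral>\<omega>. (g1n M X K f h (X 1 \<omega>))\<^sup>2 \<partial>M) = (\<integral>x. f x * (g1n M X K f h x)\<^sup>2 \<partial>lborel)"
    using h by (intro integral_X1) measurable
  also have "\<dots> = (\<integral>x. h\<^sup>2 * (f x * (smoothed_f h x - EK M X K h / h)\<^sup>2) \<partial>lborel)"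
  proof (rule Bochner_Integration.integral_cong[OF refl])
    fix x
    have "g1n M X K f h x = h * (smoothed_f h x - EK M X K h / h)"
      using g1n_eq[OF h] h by (simp add: right_diff_distrib)
    then show "f x * (g1n M X K f h x)\<^sup>2 = h\<^sup>2 * (f x * (smoothed_f h x - EK M X K h / h)\<^sup>2)"
      by (simp add: power_mult_distrib)
  qed
  finally show ?thesis by simp
qed

lemma tendsto_second_moment_g1n_div:
  assumes h: "\<And>n. h n > 0" "h \<longlonglongrightarrow> 0"
  shows "(\<lambda>n. (\<integral>\<omega>. (g1n M X K f (h n) (X 1 \<omega>))\<^sup>2 \<partial>M) / (h n)\<^sup>2)
    \<longlonglongrightarrow> (\<integral>x. (f x - (\<integral>y. f y ^ 2 \<partial>lborel))\<^sup>2 * f x \<partial>lborel)"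
proof -
  define e where "e n = EK M X K (h n) / h n" for n
  have e_bounds: "0 \<le> e n" "e n \<le> f_sup" for n
    using EK_nonneg[OF h(1)] EK_le[OF h(1)] h(1)[of n] by (auto simp: e_def field_simps)
  have eq: "(\<integral>\<omega>. (g1n M X K f (h n) (X 1 \<omega>))\<^sup>2 \<partial>M) / (h n)\<^sup>2
      = (\<integral>x. f x * (smoothed_f (h n) x - e n)\<^sup>2 \<partial>lborel)" for n
    using second_moment_g1n_eq[OF h(1)] h(1)[of n] by (simp add: e_def)
  have "(\<lambda>n. \<integral>x. f x * (smoothed_f (h n) x - e n)\<^sup>2 \<partial>lborel)
    \<longlonglongrightarrow> (\<integral>x. f x * (f x - (\<integral>y. f y ^ 2 \<partial>lborel))\<^sup>2 \<partial>lborel)"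
  proof (rule integral_dominated_convergence[where w="\<lambda>x. f_sup\<^sup>2 * f x"])
    show "(\<lambda>x. f x * (f x - (\<integral>y. f y ^ 2 \<partial>lborel))\<^sup>2) \<in> borel_measurable lborel" by measurable
    show "(\<lambda>x. f x * (smoothed_f (h n) x - e n)\<^sup>2) \<in> borel_measurable lborel" for n by measurable
    show "integrable lborel (\<lambda>x. f_sup\<^sup>2 * f x)" using integrable_f by simp
    show "AE x in lborel. (\<lambda>n. f x * (smoothed_f (h n) x - e n)\<^sup>2)
        \<longlonglongrightarrow> f x * (f x - (\<integral>y. f y ^ 2 \<partial>lborel))\<^sup>2"
      unfolding e_def by (intro AE_I2 tendsto_intros tendsto_smoothed_f tendsto_EK_div h)
    show "AE x in lborel. norm (f x * (smoothed_f (h n) x - e n)\<^sup>2) \<le> f_sup\<^sup>2 * f x" for n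
    proof (rule AE_I2)
      fix x
      have "\<bar>smoothed_f (h n) x - e n\<bar> \<le> f_sup"
        using smoothed_f_nonneg[of "h n" x] smoothed_f_le[of "h n" x] e_bounds[of n]
        by (simp add: abs_le_iff)
      then have "(smoothed_f (h n) x - e n)\<^sup>2 \<le> f_sup\<^sup>2"
        by (metis abs_ge_zero power2_abs power_mono)
      then show "norm (f x * (smoothed_f (h n) x - e n)\<^sup>2) \<le> f_sup\<^sup>2 * f x"
        using f_nonneg[of x] by (simp add: abs_mult mult.commute mult_left_mono)
    qed
  qed
  then show ?thesis unfolding eq by (simp add: mult.commute)
qed

lemma second_moment_g1n_asymp:
  assumes "\<And>n. h n > 0" "h \<longlonglongrightarrow> 0"
  shows "(\<lambda>n. \<integral>\<omega>. (g1n M X K f (h n) (X 1 \<omega>))\<^sup>2 \<partial>M) \<sim>[sequentially]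
    (\<lambda>n. (\<integral>x. (f x - (\<integral>y. f y ^ 2 \<partial>lborel))\<^sup>2 * f x \<partial>lborel) * (h n)\<^sup>2)"
  using integral_sq_diff_f_pos
  by (intro asymp_equivI'_const tendsto_second_moment_g1n_div assms) (simp add: less_imp_neq[symmetric])

lemma K_X_meas [measurable]:
  "i \<ge> 1 \<Longrightarrow> j \<ge> 1 \<Longrightarrow> (\<lambda>\<omega>. K ((X i \<omega> - X j \<omega>) / h)) \<in> borel_measurable M"
  by measurable

lemma g2n_X_meas [measurable]:
  "i \<ge> 1 \<Longrightarrow> j \<ge> 1 \<Longrightarrow> (\<lambda>\<omega>. g2n M X K f h (X i \<omega>) (X j \<omega>)) \<in> borel_measurable M"
  using measurable_compose[OF measurable_Pair[OF X_meas[of i] X_meas[of j]] g2n_meas[of h]] by simp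

lemma moment_g2n_diff_le:
  assumes h: "h > 0" and j: "2 \<le> j"
  shows "\<bar>(\<integral>\<omega>. g2n M X K f h (X 1 \<omega>) (X 2 \<omega>) ^ j \<partial>M) - (\<integral>\<omega>. K ((X 1 \<omega> - X 2 \<omega>) / h) ^ j \<partial>M)\<bar>
    \<le> h\<^sup>2 * (12 * real j * f_sup\<^sup>2 * (K_sup + 3 * h * f_sup) ^ (j - 2))"
proof -
  define a where "a \<omega> = g2n M X K f h (X 1 \<omega>) (X 2 \<omega>)" for \<omega>
  define b where "b \<omega> = K ((X 1 \<omega> - X 2 \<omega>) / h)" for \<omega>
  define r where "r = 3 * h * f_sup"
  define C where "C = j * r * (K_sup + r) ^ (j - 2)"
  have [measurable]: "a \<in> borel_measurable M" "b \<in> borel_measurable M"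
    unfolding a_def b_def by measurable
  have ab: "\<bar>a \<omega> - b \<omega>\<bar> \<le> r" for \<omega>
    unfolding a_def b_def r_def by (rule abs_g2n_diff_K_le[OF h])
  have b: "0 \<le> b \<omega>" "b \<omega> \<le> K_sup" for \<omega>
    unfolding b_def by (rule K_nonneg, rule K_le_sup)
  have r: "0 \<le> r" unfolding r_def using h f_sup_nonneg by simp
  have int_b: "integrable M b"
    using b by (intro integrable_const_bound[where B=K_sup]) auto
  have int_a_pow: "integrable M (\<lambda>\<omega>. a \<omega> ^ j)"
  proof (rule integrable_const_bound[where B="(K_sup + r) ^ j"])
    have "\<bar>a \<omega>\<bar> \<le> K_sup + r" for \<omega> using ab[of \<omega>] b[of \<omega>] by linarith
    then show "AE \<omega> in M. norm (a \<omega> ^ j) \<le> (K_sup + r) ^ j"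
      by (auto simp: power_abs intro!: power_mono)
  qed measurable
  have int_b_pow: "integrable M (\<lambda>\<omega>. b \<omega> ^ j)"
    using b by (intro integrable_const_bound[where B="K_sup ^ j"]) (auto intro!: power_mono)
  have "\<bar>(\<integral>\<omega>. a \<omega> ^ j \<partial>M) - (\<integral>\<omega>. b \<omega> ^ j \<partial>M)\<bar> \<le> (\<integral>\<omega>. \<bar>a \<omega> ^ j - b \<omega> ^ j\<bar> \<partial>M)"
    using int_a_pow int_b_pow by (simp flip: Bochner_Integration.integral_diff)
  also have "\<dots> \<le> (\<integral>\<omega>. C * (b \<omega> + r) \<partial>M)"
    using int_a_pow int_b_pow int_b abs_power_diff_le[OF ab b j] unfolding C_def
    by (intro integral_mono) (auto simp: mult.assoc)
  also have "\<dots> = C * ((\<integral>\<omega>. b \<omega> \<partial>M) + r)"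
    using int_b by (simp add: prob_space)
  also have "\<dots> \<le> C * (h * f_sup + r)"
    using EK_le[OF h] r K_sup_nonneg unfolding EK_def b_def[symmetric] C_def
    by (intro mult_left_mono) auto
  also have "\<dots> = h\<^sup>2 * (12 * real j * f_sup\<^sup>2 * (K_sup + 3 * h * f_sup) ^ (j - 2))"
    unfolding C_def r_def by (simp add: power2_eq_square algebra_simps)
  finally show ?thesis unfolding a_def b_def .
qed

lemma moment_g2n_asymp:
  assumes j: "2 \<le> j" and h: "\<And>n. h n > 0" "h \<longlonglongrightarrow> 0"
  shows "(\<lambda>n. \<integral>\<omega>. g2n M X K f (h n) (X 1 \<omega>) (X 2 \<omega>) ^ j \<partial>M)
    \<sim>[sequentially] (\<lambda>n. \<integral>\<omega>. K ((X 1 \<omega> - X 2 \<omega>) / h n) ^ j \<partial>M)"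
proof (rule asymp_equiv_if_diff_le)
  show "\<bar>(\<integral>\<omega>. g2n M X K f (h n) (X 1 \<omega>) (X 2 \<omega>) ^ j \<partial>M) - (\<integral>\<omega>. K ((X 1 \<omega> - X 2 \<omega>) / h n) ^ j \<partial>M)\<bar>
    \<le> h n * (h n * (12 * real j * f_sup\<^sup>2 * (K_sup + 3 * h n * f_sup) ^ (j - 2)))" for n
    using moment_g2n_diff_le[OF h(1) j, of n] by (simp add: power2_eq_square mult.assoc)
  have "(\<lambda>n. h n * (12 * real j * f_sup\<^sup>2 * (K_sup + 3 * h n * f_sup) ^ (j - 2)))
    \<longlonglongrightarrow> 0 * (12 * real j * f_sup\<^sup>2 * (K_sup + 3 * 0 * f_sup) ^ (j - 2))"
    by (intro tendsto_intros h(2))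
  then show "(\<lambda>n. h n * (12 * real j * f_sup\<^sup>2 * (K_sup + 3 * h n * f_sup) ^ (j - 2))) \<longlonglongrightarrow> 0"
    by simp
  show "(\<integral>s. K s ^ j \<partial>lborel) * (\<integral>x. f x ^ 2 \<partial>lborel) \<noteq> 0"
    using integral_K_power_pos[of j] integral_f_power_pos[of 2] j by simp
qed (use tendsto_expectation_K_power_div[OF _ h] j h(1) in auto)

lemma nn_integral_law_K_plus_mult_le:
  assumes h: "h > 0" and r: "r \<ge> 0"
  shows "(\<integral>\<^sup>+w. ennreal (K ((w - x) / h) + r) * t \<partial>law) \<le> ennreal (h * f_sup + r) * t"
proof -
  have "(\<integral>\<^sup>+w. ennreal (K ((w - x) / h) + r) \<partial>law) = ennreal (\<integral>w. f w * (K ((x - w) / h) + r) \<partial>lborel)"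
    using K_nonneg K_le_sup r
    by (subst nn_integral_law[where B="K_sup + r"]) (auto simp: K_diff_commute[of _ x] intro: add_mono)
  also have "(\<integral>w. f w * (K ((x - w) / h) + r) \<partial>lborel) = h * smoothed_f h x + r"
    using integral_f_K_scaled[OF h] integral_f K_nonneg K_le_sup integrable_f
    by (simp add: distrib_left integrable_f_mult[where B=K_sup])
  finally have "(\<integral>\<^sup>+w. ennreal (K ((w - x) / h) + r) \<partial>law) \<le> ennreal (h * f_sup + r)"
    using smoothed_f_le[of h x] h by (simp add: ennreal_leI)
  then show ?thesis
    by (subst nn_integral_multc) (auto intro: mult_right_mono)
qed

lemma expectation_K_path_le:
  assumes abcd: "a \<ge> 1" "b \<ge> 1" "c \<ge> 1" "d \<ge> 1" "distinct [a, b, c, d]" and h: "h > 0" and r: "r \<ge> 0"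
  shows "(\<integral>\<omega>. (K ((X a \<omega> - X b \<omega>) / h) + r) * (K ((X b \<omega> - X c \<omega>) / h) + r) * (K ((X c \<omega> - X d \<omega>) / h) + r) \<partial>M)
    \<le> (h * f_sup + r) ^ 3"
proof -
  define l where "l x y = K ((x - y) / h) + r" for x y
  define B where "B = h * f_sup + r"
  have l_nonneg: "0 \<le> l x y" for x y unfolding l_def using K_nonneg r by simp
  have B: "B \<ge> 0" unfolding B_def using h f_sup_nonneg r by simp
  have [measurable]: "(\<lambda>w. l w x) \<in> borel_measurable borel" for x unfolding l_def by measurable
  have step: "(\<integral>\<^sup>+w. ennreal (l w x) * t \<partial>law) \<le> ennreal B * t" for x t
    unfolding l_def B_def by (rule nn_integral_law_K_plus_mult_le[OF h r])
  have "(\<lambda>(w, x, y, z). ennreal (l w x) * (ennreal (l x y) * ennreal (l y z)))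
    \<in> borel_measurable (borel \<Otimes>\<^sub>M borel \<Otimes>\<^sub>M borel \<Otimes>\<^sub>M borel)"
    unfolding l_def by measurable
  from nn_integral_X4[OF abcd this]
  have "(\<integral>\<^sup>+\<omega>. ennreal (l (X a \<omega>) (X b \<omega>) * l (X b \<omega>) (X c \<omega>) * l (X c \<omega>) (X d \<omega>)) \<partial>M)
    = (\<integral>\<^sup>+z. \<integral>\<^sup>+y. \<integral>\<^sup>+x. \<integral>\<^sup>+w. ennreal (l w x) * (ennreal (l x y) * ennreal (l y z)) \<partial>law \<partial>law \<partial>law \<partial>law)"
    using l_nonneg by (simp add: ennreal_mult mult.assoc)
  also have "\<dots> \<le> (\<integral>\<^sup>+z. \<integral>\<^sup>+y. \<integral>\<^sup>+x. ennreal B * (ennreal (l x y) * ennreal (l y z)) \<partial>law \<partial>law \<partial>law)"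
    by (intro nn_integral_mono step)
  also have "\<dots> \<le> (\<integral>\<^sup>+z. \<integral>\<^sup>+y. ennreal B * (ennreal B * ennreal (l y z)) \<partial>law \<partial>law)"
    using step by (intro nn_integral_mono) (simp add: nn_integral_cmult mult_left_mono)
  also have "\<dots> \<le> (\<integral>\<^sup>+z. ennreal B * (ennreal B * ennreal B) \<partial>law)"
    using step[of _ 1] by (intro nn_integral_mono) (simp add: nn_integral_cmult mult_left_mono)
  also have "\<dots> = ennreal (B ^ 3)" using B by (simp add: ennreal_mult power3_eq_cube mult.assoc)
  finally have "(\<integral>\<^sup>+\<omega>. ennreal (l (X a \<omega>) (X b \<omega>) * l (X b \<omega>) (X c \<omega>) * l (X c \<omega>) (X d \<omega>)) \<partial>M) \<le> ennreal (B ^ 3)" .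
  then show ?thesis
    using abcd l_nonneg B unfolding l_def[symmetric] B_def[symmetric]
    by (subst integral_eq_nn_integral) (auto simp: l_def intro: enn2real_leI)
qed

lemma abs_g2n_4cycle_diff_le:
  assumes h: "h > 0"
  defines "l \<equiv> \<lambda>x y. K ((x - y) / h) + 3 * h * f_sup"
  shows "\<bar>g2n M X K f h x1 x3 * g2n M X K f h x1 x4 * g2n M X K f h x2 x3 * g2n M X K f h x2 x4
      - K ((x1 - x3) / h) * K ((x1 - x4) / h) * K ((x2 - x3) / h) * K ((x2 - x4) / h)\<bar>
    \<le> 3 * h * f_sup * (l x1 x4 * l x2 x3 * l x2 x4 + l x1 x3 * l x2 x3 * l x2 x4
      + l x1 x3 * l x1 x4 * l x2 x4 + l x1 x3 * l x1 x4 * l x2 x3)"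
proof -
  note gk = abs_g2n_diff_K_le[OF h]
  have kl: "\<bar>K ((x - y) / h)\<bar> \<le> l x y" for x y
    unfolding l_def using K_nonneg h f_sup_nonneg by simp
  have gl: "\<bar>g2n M X K f h x y\<bar> \<le> l x y" for x y
    using gk[of x y] K_nonneg[of "(x - y) / h"] unfolding l_def by linarith
  show ?thesis by (rule abs_prod4_diff_le[OF gk gk gk gk gl gl gl kl kl kl])
qed

lemma expectation_4cycle_paths_le:
  assumes h: "h > 0" and r: "r \<ge> 0"
  defines "l \<equiv> \<lambda>i j \<omega>. K ((X i \<omega> - X j \<omega>) / h) + r"
  shows "integrable M (\<lambda>\<omega>. l 1 4 \<omega> * l 2 3 \<omega> * l 2 4 \<omega> + l 1 3 \<omega> * l 2 3 \<omega> * l 2 4 \<omega>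
      + l 1 3 \<omega> * l 1 4 \<omega> * l 2 4 \<omega> + l 1 3 \<omega> * l 1 4 \<omega> * l 2 3 \<omega>)"
    and "(\<integral>\<omega>. l 1 4 \<omega> * l 2 3 \<omega> * l 2 4 \<omega> + l 1 3 \<omega> * l 2 3 \<omega> * l 2 4 \<omega>
      + l 1 3 \<omega> * l 1 4 \<omega> * l 2 4 \<omega> + l 1 3 \<omega> * l 1 4 \<omega> * l 2 3 \<omega> \<partial>M) \<le> 4 * (h * f_sup + r) ^ 3"
proof -
  have [measurable]: "i \<ge> 1 \<Longrightarrow> j \<ge> 1 \<Longrightarrow> l i j \<in> borel_measurable M" for i j
    unfolding l_def by measurable
  have l_bounds: "0 \<le> l i j \<omega>" "l i j \<omega> \<le> K_sup + r" for i j \<omega>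
    unfolding l_def using K_nonneg K_le_sup r by (auto intro: add_mono)
  have int3: "integrable M (\<lambda>\<omega>. l a b \<omega> * l c d \<omega> * l e i \<omega>)"
    if "a \<ge> 1" "b \<ge> 1" "c \<ge> 1" "d \<ge> 1" "e \<ge> 1" "i \<ge> 1" for a b c d e i
    using l_bounds that by (intro integrable_const_bound[where B="(K_sup + r) ^ 3"])
      (auto simp: power3_eq_cube intro!: mult_mono')
  show "integrable M (\<lambda>\<omega>. l 1 4 \<omega> * l 2 3 \<omega> * l 2 4 \<omega> + l 1 3 \<omega> * l 2 3 \<omega> * l 2 4 \<omega>
      + l 1 3 \<omega> * l 1 4 \<omega> * l 2 4 \<omega> + l 1 3 \<omega> * l 1 4 \<omega> * l 2 3 \<omega>)"
    by (intro Bochner_Integration.integrable_add int3) auto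
  have path: "(\<integral>\<omega>. l a b \<omega> * l b c \<omega> * l c d \<omega> \<partial>M) \<le> (h * f_sup + r) ^ 3"
    if "a \<ge> 1" "b \<ge> 1" "c \<ge> 1" "d \<ge> 1" "distinct [a, b, c, d]" for a b c d
    unfolding l_def by (rule expectation_K_path_le[OF that h r])
  have l_sym: "l i j \<omega> = l j i \<omega>" for i j \<omega> unfolding l_def by (simp add: K_diff_commute)
  have "(\<integral>\<omega>. l 1 4 \<omega> * l 2 3 \<omega> * l 2 4 \<omega> + l 1 3 \<omega> * l 2 3 \<omega> * l 2 4 \<omega>
      + l 1 3 \<omega> * l 1 4 \<omega> * l 2 4 \<omega> + l 1 3 \<omega> * l 1 4 \<omega> * l 2 3 \<omega> \<partial>M)
    = (\<integral>\<omega>. l 1 4 \<omega> * l 2 3 \<omega> * l 2 4 \<omega> \<partial>M) + (\<integral>\<omega>. l 1 3 \<omega> * l 2 3 \<omega> * l 2 4 \<omega> \<partial>M)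
      + (\<integral>\<omega>. l 1 3 \<omega> * l 1 4 \<omega> * l 2 4 \<omega> \<partial>M) + (\<integral>\<omega>. l 1 3 \<omega> * l 1 4 \<omega> * l 2 3 \<omega> \<partial>M)"
    by (simp add: int3 Bochner_Integration.integrable_add)
  also have "\<dots> \<le> 4 * (h * f_sup + r) ^ 3"
    using path[of 1 4 2 3] path[of 1 3 2 4] path[of 3 1 4 2] path[of 4 1 3 2]
    unfolding l_sym[of 4 2] l_sym[of 3 2] l_sym[of 3 1] l_sym[of 4 1] by (simp add: mult_ac)
  finally show "(\<integral>\<omega>. l 1 4 \<omega> * l 2 3 \<omega> * l 2 4 \<omega> + l 1 3 \<omega> * l 2 3 \<omega> * l 2 4 \<omega>
      + l 1 3 \<omega> * l 1 4 \<omega> * l 2 4 \<omega> + l 1 3 \<omega> * l 1 4 \<omega> * l 2 3 \<omega> \<partial>M) \<le> 4 * (h * f_sup + r) ^ 3" .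
qed

lemma expectation_g2n_4cycle_diff_le:
  assumes h: "h > 0"
  shows "\<bar>(\<integral>\<omega>. g2n M X K f h (X 1 \<omega>) (X 3 \<omega>) * g2n M X K f h (X 1 \<omega>) (X 4 \<omega>)
                  * g2n M X K f h (X 2 \<omega>) (X 3 \<omega>) * g2n M X K f h (X 2 \<omega>) (X 4 \<omega>) \<partial>M)
      - (\<integral>\<omega>. K ((X 1 \<omega> - X 3 \<omega>) / h) * K ((X 1 \<omega> - X 4 \<omega>) / h) * K ((X 2 \<omega> - X 3 \<omega>) / h)
           * K ((X 2 \<omega> - X 4 \<omega>) / h) \<partial>M)\<bar> \<le> 768 * h ^ 4 * f_sup ^ 4"
proof -
  define r where "r = 3 * h * f_sup"
  define g where "g i j \<omega> = g2n M X K f h (X i \<omega>) (X j \<omega>)" for i j \<omega>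
  define k where "k i j \<omega> = K ((X i \<omega> - X j \<omega>) / h)" for i j \<omega>
  define l where "l i j \<omega> = k i j \<omega> + r" for i j \<omega>
  define T where "T \<omega> = l 1 4 \<omega> * l 2 3 \<omega> * l 2 4 \<omega> + l 1 3 \<omega> * l 2 3 \<omega> * l 2 4 \<omega>
    + l 1 3 \<omega> * l 1 4 \<omega> * l 2 4 \<omega> + l 1 3 \<omega> * l 1 4 \<omega> * l 2 3 \<omega>" for \<omega>
  have r: "0 \<le> r" unfolding r_def using h f_sup_nonneg by simp
  note T = expectation_4cycle_paths_le[OF h r, folded k_def, folded l_def, folded T_def]
  have k_le: "\<bar>k i j \<omega>\<bar> \<le> K_sup + r" for i j \<omega>
    using K_nonneg K_le_sup r unfolding k_def by (simp add: add_increasing2)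
  have g_le: "\<bar>g i j \<omega>\<bar> \<le> K_sup + r" for i j \<omega>
    using abs_g2n_diff_K_le[OF h, of "X i \<omega>" "X j \<omega>"] K_le_sup[of "(X i \<omega> - X j \<omega>) / h"]
      K_nonneg[of "(X i \<omega> - X j \<omega>) / h"] K_sup_nonneg
    unfolding g_def r_def by (simp add: abs_le_iff)
  have int4: "integrable M (\<lambda>\<omega>. u 1 3 \<omega> * u 1 4 \<omega> * u 2 3 \<omega> * u 2 4 \<omega>)"
    if "\<And>i j \<omega>. \<bar>u i j \<omega>\<bar> \<le> K_sup + r" "\<And>i j. i \<ge> 1 \<Longrightarrow> j \<ge> 1 \<Longrightarrow> u i j \<in> borel_measurable M"
    for u :: "nat \<Rightarrow> nat \<Rightarrow> 'a \<Rightarrow> real"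
    using that(1) that(2)[of 1 3] that(2)[of 1 4] that(2)[of 2 3] that(2)[of 2 4]
    by (intro integrable_const_bound[where B="(K_sup + r) ^ 4"])
      (auto simp: abs_mult power4_eq_xxxx intro!: mult_mono')
  have int_P: "integrable M (\<lambda>\<omega>. g 1 3 \<omega> * g 1 4 \<omega> * g 2 3 \<omega> * g 2 4 \<omega>)"
    by (rule int4[OF g_le]) (simp add: g_def)
  have int_Q: "integrable M (\<lambda>\<omega>. k 1 3 \<omega> * k 1 4 \<omega> * k 2 3 \<omega> * k 2 4 \<omega>)"
    by (rule int4[OF k_le]) (simp add: k_def)
  have "\<bar>(\<integral>\<omega>. g 1 3 \<omega> * g 1 4 \<omega> * g 2 3 \<omega> * g 2 4 \<omega> \<partial>M) - (\<integral>\<omega>. k 1 3 \<omega> * k 1 4 \<omega> * k 2 3 \<omega> * k 2 4 \<omega> \<partial>M)\<bar>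
      \<le> (\<integral>\<omega>. \<bar>g 1 3 \<omega> * g 1 4 \<omega> * g 2 3 \<omega> * g 2 4 \<omega> - k 1 3 \<omega> * k 1 4 \<omega> * k 2 3 \<omega> * k 2 4 \<omega>\<bar> \<partial>M)"
    using int_P int_Q by (simp flip: Bochner_Integration.integral_diff)
  also have "\<dots> \<le> (\<integral>\<omega>. r * T \<omega> \<partial>M)"
    using int_P int_Q T(1) abs_g2n_4cycle_diff_le[OF h]
    unfolding g_def k_def l_def T_def r_def by (intro integral_mono) auto
  also have "\<dots> \<le> r * (4 * (h * f_sup + r) ^ 3)"
    using T(2) r by (simp add: mult_left_mono)
  also have "\<dots> = 768 * h ^ 4 * f_sup ^ 4" unfolding r_def by (simp add: power_def algebra_simps)
  finally show ?thesis unfolding g_def k_def .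
qed

text \<open>For symmetric K, Kcorr is the self-convolution K * K.\<close>

definition Kcorr :: "real \<Rightarrow> real" where
  "Kcorr u = (\<integral>s. K s * K (u + s) \<partial>lborel)"

definition Kcorr_f :: "real \<Rightarrow> real \<Rightarrow> real \<Rightarrow> real" where
  "Kcorr_f h z u = (\<integral>s. K s * K (u + s) * f (z - h * s) \<partial>lborel)"

definition Kcorr_f_moment :: "real \<Rightarrow> real \<Rightarrow> real" where
  "Kcorr_f_moment h z = (\<integral>u. f (z + h * u) * (Kcorr_f h z u)\<^sup>2 \<partial>lborel)"

lemma Kcorr_meas [measurable]: "Kcorr \<in> borel_measurable borel"
  unfolding Kcorr_def by measurable

lemma Kcorr_f_meas [measurable]: "Kcorr_f h z \<in> borel_measurable borel"
  unfolding Kcorr_f_def by measurable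

lemma Kcorr_f_moment_meas [measurable]: "Kcorr_f_moment h \<in> borel_measurable borel"
  unfolding Kcorr_f_moment_def Kcorr_f_def by measurable

lemma integrable_K_mult_shift: "integrable lborel (\<lambda>s. K s * K (u + s))"
proof (rule Bochner_Integration.integrable_bound[where f="\<lambda>s. K_sup * K s"])
  show "AE s in lborel. norm (K s * K (u + s)) \<le> norm (K_sup * K s)"
    using K_nonneg K_le_sup K_sup_nonneg by (auto intro!: mult_left_mono simp: mult.commute[of K_sup])
qed (use K_int in simp_all)

lemma Kcorr_nonneg: "0 \<le> Kcorr u"
  unfolding Kcorr_def using K_nonneg by simp

lemma Kcorr_le: "Kcorr u \<le> K_sup"
proof -
  have "Kcorr u \<le> (\<integral>s. K_sup * K s \<partial>lborel)"
    unfolding Kcorr_def using integrable_K_mult_shift K_int K_nonneg K_le_sup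
    by (intro integral_mono) (auto intro!: mult_left_mono simp: mult.commute[of K_sup])
  then show ?thesis using K_one by simp
qed

lemma nn_integral_Kcorr: "(\<integral>\<^sup>+u. ennreal (Kcorr u) \<partial>lborel) = 1"
proof -
  have K1: "(\<integral>\<^sup>+x. ennreal (K x) \<partial>lborel) = 1"
    using nn_integral_eq_integral[OF K_int] K_nonneg K_one by simp
  have "(\<integral>\<^sup>+u. ennreal (Kcorr u) \<partial>lborel) = (\<integral>\<^sup>+u. \<integral>\<^sup>+s. ennreal (K s * K (u + s)) \<partial>lborel \<partial>lborel)"
    unfolding Kcorr_def using integrable_K_mult_shift K_nonneg
    by (intro nn_integral_cong) (simp add: nn_integral_eq_integral)
  also have "\<dots> = (\<integral>\<^sup>+s. \<integral>\<^sup>+u. ennreal (K s * K (u + s)) \<partial>lborel \<partial>lborel)"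
    by (rule lborel_pair.Fubini') measurable
  also have "\<dots> = (\<integral>\<^sup>+s. ennreal (K s) * (\<integral>\<^sup>+u. ennreal (K (u + s)) \<partial>lborel) \<partial>lborel)"
    using K_nonneg by (intro nn_integral_cong) (simp add: ennreal_mult nn_integral_cmult)
  also have "\<dots> = (\<integral>\<^sup>+s. ennreal (K s) \<partial>lborel)"
    using nn_integral_real_affine[of "\<lambda>x. ennreal (K x)" 1] K1 by (simp add: add.commute)
  finally show ?thesis using K1 by simp
qed

lemma integrable_Kcorr: "integrable lborel Kcorr"
  using nn_integral_Kcorr Kcorr_nonneg by (intro integrableI_nonneg) auto

lemma integral_Kcorr: "(\<integral>u. Kcorr u \<partial>lborel) = 1"
  using nn_integral_Kcorr nn_integral_eq_integral[OF integrable_Kcorr] Kcorr_nonneg by simp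

lemma integrable_Kcorr_sq: "integrable lborel (\<lambda>u. (Kcorr u)\<^sup>2)"
proof (rule Bochner_Integration.integrable_bound[where f="\<lambda>u. K_sup * Kcorr u"])
  show "AE u in lborel. norm ((Kcorr u)\<^sup>2) \<le> norm (K_sup * Kcorr u)"
    using Kcorr_nonneg Kcorr_le K_sup_nonneg by (auto simp: power2_eq_square intro!: mult_right_mono)
qed (use integrable_Kcorr in simp_all)

lemma integral_Kcorr_sq_pos: "(\<integral>u. (Kcorr u)\<^sup>2 \<partial>lborel) > 0"
  using integral_power_pos[OF integrable_Kcorr_sq] Kcorr_nonneg integral_Kcorr by simp

lemma integral_K_4cycle_eq:
  "(\<integral>x. \<integral>t. \<integral>s. K s * K t * K (x + s) * K (x + t) \<partial>lborel \<partial>lborel \<partial>lborel) = (\<integral>u. (Kcorr u)\<^sup>2 \<partial>lborel)"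
proof (rule Bochner_Integration.integral_cong[OF refl])
  fix x
  have inner: "(\<integral>s. K s * K t * K (x + s) * K (x + t) \<partial>lborel) = (K t * K (x + t)) * Kcorr x" for t
  proof -
    have "(\<lambda>s. K s * K t * K (x + s) * K (x + t)) = (\<lambda>s. (K t * K (x + t)) * (K s * K (x + s)))"
      by (auto simp: fun_eq_iff mult_ac)
    then show ?thesis unfolding Kcorr_def by simp
  qed
  have "(\<integral>t. \<integral>s. K s * K t * K (x + s) * K (x + t) \<partial>lborel \<partial>lborel) = (\<integral>t. (K t * K (x + t)) * Kcorr x \<partial>lborel)"
    by (rule Bochner_Integration.integral_cong[OF refl]) (rule inner)
  also have "\<dots> = Kcorr x * Kcorr x" unfolding Kcorr_def by simp
  finally show "(\<integral>t. \<integral>s. K s * K t * K (x + s) * K (x + t) \<partial>lborel \<partial>lborel) = (Kcorr x)\<^sup>2"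
    by (simp add: power2_eq_square)
qed

lemma abs_Kcorr_f_le: "\<bar>Kcorr_f h z u\<bar> \<le> f_sup * Kcorr u"
  using abs_integral_smoothed_f_le[OF integrable_K_mult_shift[of u], of z h] K_nonneg
  unfolding Kcorr_f_def Kcorr_def by (simp add: abs_mult)

lemma tendsto_Kcorr_f: "h \<longlonglongrightarrow> 0 \<Longrightarrow> (\<lambda>n. Kcorr_f (h n) z u) \<longlonglongrightarrow> f z * Kcorr u"
  using tendsto_integral_smoothed_f[OF integrable_K_mult_shift[of u], of h z]
  unfolding Kcorr_f_def Kcorr_def by (simp add: mult.commute)

lemma abs_Kcorr_f_moment_integrand_le: "\<bar>f (z + h * u) * (Kcorr_f h z u)\<^sup>2\<bar> \<le> f_sup ^ 3 * (Kcorr u)\<^sup>2"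
proof -
  have "(Kcorr_f h z u)\<^sup>2 \<le> (f_sup * Kcorr u)\<^sup>2"
    using abs_Kcorr_f_le by (metis abs_ge_zero power2_abs power_mono)
  then have "f (z + h * u) * (Kcorr_f h z u)\<^sup>2 \<le> f_sup * (f_sup * Kcorr u)\<^sup>2"
    using f_le_sup f_nonneg f_sup_nonneg by (intro mult_mono) auto
  then show ?thesis using f_nonneg by (simp add: abs_mult power_mult_distrib power3_eq_cube power2_eq_square mult_ac)
qed

lemma integrable_Kcorr_f_moment_integrand: "integrable lborel (\<lambda>u. f (z + h * u) * (Kcorr_f h z u)\<^sup>2)"
proof (rule Bochner_Integration.integrable_bound[where f="\<lambda>u. f_sup ^ 3 * (Kcorr u)\<^sup>2"])
  show "AE u in lborel. norm (f (z + h * u) * (Kcorr_f h z u)\<^sup>2) \<le> norm (f_sup ^ 3 * (Kcorr u)\<^sup>2)"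
    using abs_Kcorr_f_moment_integrand_le f_sup_nonneg by simp
qed (use integrable_Kcorr_sq in simp_all)

lemma abs_Kcorr_f_moment_le: "\<bar>Kcorr_f_moment h z\<bar> \<le> f_sup ^ 3 * (\<integral>u. (Kcorr u)\<^sup>2 \<partial>lborel)"
proof -
  have "\<bar>Kcorr_f_moment h z\<bar> \<le> (\<integral>u. \<bar>f (z + h * u) * (Kcorr_f h z u)\<^sup>2\<bar> \<partial>lborel)"
    unfolding Kcorr_f_moment_def by (rule integral_abs_bound)
  also have "\<dots> \<le> (\<integral>u. f_sup ^ 3 * (Kcorr u)\<^sup>2 \<partial>lborel)"
    using integrable_Kcorr_f_moment_integrand integrable_Kcorr_sq abs_Kcorr_f_moment_integrand_le
    by (intro integral_mono) auto
  finally show ?thesis by simp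
qed

lemma tendsto_Kcorr_f_moment:
  assumes h: "h \<longlonglongrightarrow> 0"
  shows "(\<lambda>n. Kcorr_f_moment (h n) z) \<longlonglongrightarrow> f z ^ 3 * (\<integral>u. (Kcorr u)\<^sup>2 \<partial>lborel)"
proof -
  have "(\<lambda>n. Kcorr_f_moment (h n) z) \<longlonglongrightarrow> (\<integral>u. f z * (f z * Kcorr u)\<^sup>2 \<partial>lborel)"
    unfolding Kcorr_f_moment_def
  proof (rule integral_dominated_convergence[where w="\<lambda>u. f_sup ^ 3 * (Kcorr u)\<^sup>2"])
    show "(\<lambda>u. f z * (f z * Kcorr u)\<^sup>2) \<in> borel_measurable lborel" by measurable
    show "(\<lambda>u. f (z + h n * u) * (Kcorr_f (h n) z u)\<^sup>2) \<in> borel_measurable lborel" for n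
      by measurable
    show "integrable lborel (\<lambda>u. f_sup ^ 3 * (Kcorr u)\<^sup>2)" using integrable_Kcorr_sq by simp
    show "AE u in lborel. (\<lambda>n. f (z + h n * u) * (Kcorr_f (h n) z u)\<^sup>2) \<longlonglongrightarrow> f z * (f z * Kcorr u)\<^sup>2"
    proof (intro AE_I2 tendsto_intros tendsto_Kcorr_f h)
      fix u
      have "(\<lambda>n. z + h n * u) \<longlonglongrightarrow> z + 0 * u" by (intro tendsto_intros h)
      then show "(\<lambda>n. f (z + h n * u)) \<longlonglongrightarrow> f z"
        using f_cont by (auto intro: isCont_tendsto_compose simp: continuous_on_eq_continuous_at)
    qed
    show "AE u in lborel. norm (f (z + h n * u) * (Kcorr_f (h n) z u)\<^sup>2) \<le> f_sup ^ 3 * (Kcorr u)\<^sup>2" for n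
      using abs_Kcorr_f_moment_integrand_le by simp
  qed
  also have "(\<lambda>u. f z * (f z * Kcorr u)\<^sup>2) = (\<lambda>u. f z ^ 3 * (Kcorr u)\<^sup>2)"
    by (simp add: fun_eq_iff power_mult_distrib power3_eq_cube power2_eq_square)
  finally show ?thesis by simp
qed

lemma tendsto_integral_f_Kcorr_f_moment:
  assumes h: "h \<longlonglongrightarrow> 0"
  shows "(\<lambda>n. \<integral>z. f z * Kcorr_f_moment (h n) z \<partial>lborel)
    \<longlonglongrightarrow> (\<integral>u. (Kcorr u)\<^sup>2 \<partial>lborel) * (\<integral>x. f x ^ 4 \<partial>lborel)"
proof -
  let ?C = "\<integral>u. (Kcorr u)\<^sup>2 \<partial>lborel"
  have "(\<lambda>n. \<integral>z. f z * Kcorr_f_moment (h n) z \<partial>lborel) \<longlonglongrightarrow> (\<integral>z. f z * (f z ^ 3 * ?C) \<partial>lborel)"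
  proof (rule integral_dominated_convergence[where w="\<lambda>z. f z * (f_sup ^ 3 * ?C)"])
    show "(\<lambda>z. f z * (f z ^ 3 * ?C)) \<in> borel_measurable lborel" by measurable
    show "(\<lambda>z. f z * Kcorr_f_moment (h n) z) \<in> borel_measurable lborel" for n by measurable
    show "integrable lborel (\<lambda>z. f z * (f_sup ^ 3 * ?C))" using integrable_f by simp
    show "AE z in lborel. (\<lambda>n. f z * Kcorr_f_moment (h n) z) \<longlonglongrightarrow> f z * (f z ^ 3 * ?C)"
      by (intro AE_I2 tendsto_intros tendsto_Kcorr_f_moment h)
    show "AE z in lborel. norm (f z * Kcorr_f_moment (h n) z) \<le> f z * (f_sup ^ 3 * ?C)" for n
      using abs_Kcorr_f_moment_le f_nonneg by (auto simp: abs_mult intro!: mult_left_mono)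
  qed
  also have "(\<lambda>z. f z * (f z ^ 3 * ?C)) = (\<lambda>z. ?C * f z ^ 4)"
    by (simp add: fun_eq_iff power_def eval_nat_numeral)
  finally show ?thesis by simp
qed

lemma expectation_4cycle:
  fixes k :: "real \<times> real \<Rightarrow> real"
  assumes [measurable]: "k \<in> borel_measurable (borel \<Otimes>\<^sub>M borel)"
    and k: "\<And>p. 0 \<le> k p" "\<And>p. k p \<le> B"
  defines "G \<equiv> \<lambda>z y. \<integral>w. f w * (k (z, w) * k (y, w)) \<partial>lborel"
  shows "(\<integral>\<omega>. k (X 1 \<omega>, X 3 \<omega>) * k (X 1 \<omega>, X 4 \<omega>) * k (X 2 \<omega>, X 3 \<omega>) * k (X 2 \<omega>, X 4 \<omega>) \<partial>M)
    = (\<integral>z. f z * (\<integral>y. f y * (G z y)\<^sup>2 \<partial>lborel) \<partial>lborel)"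
proof -
  define W where "W z = (\<integral>y. f y * (G z y)\<^sup>2 \<partial>lborel)" for z
  have [measurable]: "(\<lambda>p. G (fst p) (snd p)) \<in> borel_measurable (borel \<Otimes>\<^sub>M borel)" "G z \<in> borel_measurable borel" for z
    unfolding G_def by measurable
  have [measurable]: "W \<in> borel_measurable borel" unfolding W_def by measurable
  have kk: "0 \<le> k (z, w) * k (y, w)" "k (z, w) * k (y, w) \<le> B * B" for z y w
    using k[of "(z, w)"] k[of "(y, w)"] by (auto intro: mult_mono)
  have G: "0 \<le> G z y" "G z y \<le> B * B" for z y
    unfolding G_def using integral_f_mult_bounds[of "\<lambda>w. k (z, w) * k (y, w)" "B * B"] kk by auto
  have G2: "0 \<le> (G z y)\<^sup>2" "(G z y)\<^sup>2 \<le> (B * B)\<^sup>2" for z y using G[of z y] by (auto intro: power_mono)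
  have W: "0 \<le> W z" "W z \<le> (B * B)\<^sup>2" for z
    unfolding W_def using integral_f_mult_bounds[of "\<lambda>y. (G z y)\<^sup>2" "(B * B)\<^sup>2"] G2 by auto
  have law_kk: "(\<integral>\<^sup>+w. ennreal (k (z, w) * k (y, w)) \<partial>law) = ennreal (G z y)" for z y
    unfolding G_def using kk by (intro nn_integral_law[where B="B * B"]) auto
  have "(\<lambda>(w, x, y, z). ennreal (k (z, x) * k (z, w) * k (y, x) * k (y, w))) \<in> borel_measurable (borel \<Otimes>\<^sub>M borel \<Otimes>\<^sub>M borel \<Otimes>\<^sub>M borel)"
    by measurable
  \<comment> \<open>Integrating out X_4 and then X_3 each produces a factor G(X_1, X_2).\<close>
  from nn_integral_X4[of 4 3 2 1, OF _ _ _ _ _ this]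
  have "(\<integral>\<^sup>+\<omega>. ennreal (k (X 1 \<omega>, X 3 \<omega>) * k (X 1 \<omega>, X 4 \<omega>) * k (X 2 \<omega>, X 3 \<omega>) * k (X 2 \<omega>, X 4 \<omega>)) \<partial>M)
     = (\<integral>\<^sup>+z. \<integral>\<^sup>+y. \<integral>\<^sup>+x. \<integral>\<^sup>+w. ennreal (k (z, w) * k (y, w)) * ennreal (k (z, x) * k (y, x)) \<partial>law \<partial>law \<partial>law \<partial>law)"
    using k by (simp add: ennreal_mult[symmetric] mult_ac)
  also have "\<dots> = (\<integral>\<^sup>+z. \<integral>\<^sup>+y. \<integral>\<^sup>+x. ennreal (G z y) * ennreal (k (z, x) * k (y, x)) \<partial>law \<partial>law \<partial>law)"
    by (simp add: nn_integral_multc law_kk)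
  also have "\<dots> = (\<integral>\<^sup>+z. \<integral>\<^sup>+y. ennreal ((G z y)\<^sup>2) \<partial>law \<partial>law)"
    using G by (simp add: nn_integral_cmult law_kk ennreal_mult[symmetric] power2_eq_square)
  also have "\<dots> = (\<integral>\<^sup>+z. ennreal (W z) \<partial>law)"
    unfolding W_def using G2 by (intro nn_integral_cong nn_integral_law) auto
  also have "\<dots> = ennreal (\<integral>z. f z * W z \<partial>lborel)"
    using W by (intro nn_integral_law) auto
  finally show ?thesis
    using k integral_f_mult_bounds(1)[of W, OF _ W(1) W(2)] unfolding W_def[symmetric]
    by (subst integral_eq_nn_integral) auto
qed

lemma integral_f_K_pair:
  assumes h: "h > 0"
  shows "(\<integral>w. f w * (K ((z - w) / h) * K ((y - w) / h)) \<partial>lborel) = h * Kcorr_f h z ((y - z) / h)"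
proof -
  have "(y - z) / h + (z - w) / h = (y - w) / h" for w by (simp add: add_divide_distrib[symmetric])
  then have "(\<integral>w. f w * (K ((z - w) / h) * K ((y - w) / h)) \<partial>lborel) =
     (\<integral>w. f w * (\<lambda>t. K t * K ((y - z) / h + t)) ((z - w) / h) \<partial>lborel)"
    by simp
  also have "\<dots> = h * (\<integral>s. K s * K ((y - z) / h + s) * f (z - h * s) \<partial>lborel)"
    by (rule integral_scaled_kernel[OF h])
  finally show ?thesis unfolding Kcorr_f_def .
qed

lemma integral_f_Kcorr_f_sq:
  assumes h: "h > 0"
  shows "(\<integral>y. f y * (h * Kcorr_f h z ((y - z) / h))\<^sup>2 \<partial>lborel) = h ^ 3 * Kcorr_f_moment h z"
proof -
  have "(\<integral>y. f y * (h * Kcorr_f h z ((y - z) / h))\<^sup>2 \<partial>lborel) =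
     \<bar>h\<bar> *\<^sub>R (\<integral>u. f (z + h * u) * (h * Kcorr_f h z ((z + h * u - z) / h))\<^sup>2 \<partial>lborel)"
    using h by (intro lborel_integral_real_affine) auto
  also have "(\<lambda>u. f (z + h * u) * (h * Kcorr_f h z ((z + h * u - z) / h))\<^sup>2)
      = (\<lambda>u. h\<^sup>2 * (f (z + h * u) * (Kcorr_f h z u)\<^sup>2))"
    using h by (auto simp: fun_eq_iff power_mult_distrib)
  finally show ?thesis using h unfolding Kcorr_f_moment_def by (simp add: power_def eval_nat_numeral)
qed

lemma expectation_K_4cycle:
  assumes h: "h > 0"
  shows "(\<integral>\<omega>. K ((X 1 \<omega> - X 3 \<omega>) / h) * K ((X 1 \<omega> - X 4 \<omega>) / h) * K ((X 2 \<omega> - X 3 \<omega>) / h)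
      * K ((X 2 \<omega> - X 4 \<omega>) / h) \<partial>M) = h ^ 3 * (\<integral>z. f z * Kcorr_f_moment h z \<partial>lborel)"
proof -
  have "(\<integral>\<omega>. K ((X 1 \<omega> - X 3 \<omega>) / h) * K ((X 1 \<omega> - X 4 \<omega>) / h) * K ((X 2 \<omega> - X 3 \<omega>) / h)
      * K ((X 2 \<omega> - X 4 \<omega>) / h) \<partial>M)
    = (\<integral>z. f z * (\<integral>y. f y * (h * Kcorr_f h z ((y - z) / h))\<^sup>2 \<partial>lborel) \<partial>lborel)"
    using expectation_4cycle[of "\<lambda>p. K ((fst p - snd p) / h)" K_sup] K_nonneg K_le_sup
    by (simp add: integral_f_K_pair[OF h])
  also have "\<dots> = (\<integral>z. h ^ 3 * (f z * Kcorr_f_moment h z) \<partial>lborel)"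
    by (simp add: integral_f_Kcorr_f_sq[OF h] mult.left_commute)
  finally show ?thesis by simp
qed

lemma tendsto_expectation_K_4cycle_div:
  assumes h: "\<And>n. h n > 0" "h \<longlonglongrightarrow> 0"
  shows "(\<lambda>n. (\<integral>\<omega>. K ((X 1 \<omega> - X 3 \<omega>) / h n) * K ((X 1 \<omega> - X 4 \<omega>) / h n) * K ((X 2 \<omega> - X 3 \<omega>) / h n)
      * K ((X 2 \<omega> - X 4 \<omega>) / h n) \<partial>M) / h n ^ 3)
    \<longlonglongrightarrow> (\<integral>u. (Kcorr u)\<^sup>2 \<partial>lborel) * (\<integral>x. f x ^ 4 \<partial>lborel)"
proof -
  have "(\<integral>\<omega>. K ((X 1 \<omega> - X 3 \<omega>) / h n) * K ((X 1 \<omega> - X 4 \<omega>) / h n) * K ((X 2 \<omega> - X 3 \<omega>) / h n)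
      * K ((X 2 \<omega> - X 4 \<omega>) / h n) \<partial>M) / h n ^ 3 = (\<integral>z. f z * Kcorr_f_moment (h n) z \<partial>lborel)" for n
    using expectation_K_4cycle[OF h(1)[of n]] h(1)[of n] by simp
  then show ?thesis using tendsto_integral_f_Kcorr_f_moment[OF h(2)] by simp
qed

lemma expectation_K_4cycle_asymp:
  assumes h: "\<And>n. h n > 0" "h \<longlonglongrightarrow> 0"
  shows "(\<lambda>n. \<integral>\<omega>. K ((X 1 \<omega> - X 3 \<omega>) / h n) * K ((X 1 \<omega> - X 4 \<omega>) / h n) * K ((X 2 \<omega> - X 3 \<omega>) / h n)
      * K ((X 2 \<omega> - X 4 \<omega>) / h n) \<partial>M)
    \<sim>[sequentially] (\<lambda>n. ((\<integral>u. (Kcorr u)\<^sup>2 \<partial>lborel) * (\<integral>x. f x ^ 4 \<partial>lborel)) * h n ^ 3)"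
proof (rule asymp_equivI'_const)
  show "(\<integral>u. (Kcorr u)\<^sup>2 \<partial>lborel) * (\<integral>x. f x ^ 4 \<partial>lborel) \<noteq> 0"
    using integral_Kcorr_sq_pos integral_f_power_pos[of 4] by simp
  show "(\<lambda>n. (\<integral>\<omega>. K ((X 1 \<omega> - X 3 \<omega>) / h n) * K ((X 1 \<omega> - X 4 \<omega>) / h n) * K ((X 2 \<omega> - X 3 \<omega>) / h n)
      * K ((X 2 \<omega> - X 4 \<omega>) / h n) \<partial>M) / h n ^ 3)
    \<longlonglongrightarrow> (\<integral>u. (Kcorr u)\<^sup>2 \<partial>lborel) * (\<integral>x. f x ^ 4 \<partial>lborel)"
    by (rule tendsto_expectation_K_4cycle_div[OF h])
qed

lemma expectation_g2n_4cycle_asymp: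
  assumes h: "\<And>n. h n > 0" "h \<longlonglongrightarrow> 0"
  shows "(\<lambda>n. \<integral>\<omega>. g2n M X K f (h n) (X 1 \<omega>) (X 3 \<omega>) * g2n M X K f (h n) (X 1 \<omega>) (X 4 \<omega>)
      * g2n M X K f (h n) (X 2 \<omega>) (X 3 \<omega>) * g2n M X K f (h n) (X 2 \<omega>) (X 4 \<omega>) \<partial>M)
    \<sim>[sequentially] (\<lambda>n. \<integral>\<omega>. K ((X 1 \<omega> - X 3 \<omega>) / h n) * K ((X 1 \<omega> - X 4 \<omega>) / h n)
      * K ((X 2 \<omega> - X 3 \<omega>) / h n) * K ((X 2 \<omega> - X 4 \<omega>) / h n) \<partial>M)"
proof (rule asymp_equiv_if_diff_le[where p="\<lambda>n. h n ^ 3"])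
  show "\<bar>(\<integral>\<omega>. g2n M X K f (h n) (X 1 \<omega>) (X 3 \<omega>) * g2n M X K f (h n) (X 1 \<omega>) (X 4 \<omega>)
      * g2n M X K f (h n) (X 2 \<omega>) (X 3 \<omega>) * g2n M X K f (h n) (X 2 \<omega>) (X 4 \<omega>) \<partial>M)
    - (\<integral>\<omega>. K ((X 1 \<omega> - X 3 \<omega>) / h n) * K ((X 1 \<omega> - X 4 \<omega>) / h n)
      * K ((X 2 \<omega> - X 3 \<omega>) / h n) * K ((X 2 \<omega> - X 4 \<omega>) / h n) \<partial>M)\<bar>
    \<le> h n ^ 3 * (768 * f_sup ^ 4 * h n)" for n
    using expectation_g2n_4cycle_diff_le[OF h(1)] by (simp add: power_def eval_nat_numeral mult_ac)
  show "(\<lambda>n. 768 * f_sup ^ 4 * h n) \<longlonglongrightarrow> 0"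
    using tendsto_mult_left[OF h(2), of "768 * f_sup ^ 4"] by simp
  show "(\<lambda>n. (\<integral>\<omega>. K ((X 1 \<omega> - X 3 \<omega>) / h n) * K ((X 1 \<omega> - X 4 \<omega>) / h n)
      * K ((X 2 \<omega> - X 3 \<omega>) / h n) * K ((X 2 \<omega> - X 4 \<omega>) / h n) \<partial>M) / h n ^ 3)
    \<longlonglongrightarrow> (\<integral>u. (Kcorr u)\<^sup>2 \<partial>lborel) * (\<integral>x. f x ^ 4 \<partial>lborel)"
    by (rule tendsto_expectation_K_4cycle_div[OF h])
  show "(\<integral>u. (Kcorr u)\<^sup>2 \<partial>lborel) * (\<integral>x. f x ^ 4 \<partial>lborel) \<noteq> 0"
    using integral_Kcorr_sq_pos integral_f_power_pos[of 4] by simp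
qed (use h(1) in simp)

end


theorem lemmaA3:
  fixes M :: "'a measure" and X :: "nat \<Rightarrow> 'a \<Rightarrow> real"
    and f K :: "real \<Rightarrow> real" and h :: "nat \<Rightarrow> real"
  assumes P: "prob_space M"
    and indep: "prob_space.indep_vars M (\<lambda>_. borel) X {1..}"
    and distr: "\<And>i. i \<ge> 1 \<Longrightarrow> distributed M lborel (X i) (\<lambda>x. ennreal (f x))"
    and f_nonneg: "\<And>x. f x \<ge> 0"
    and f_bdd: "bounded (range f)"
    and f_uc: "uniformly_continuous_on UNIV f"
    and K_meas: "K \<in> borel_measurable borel"
    and K_nonneg: "\<And>x. K x \<ge> 0"
    and K_bdd: "bounded (range K)"
    and K_sym: "\<And>x. K (- x) = K x"
    and K_int: "integrable lborel K"
    and K_one: "(\<integral>x. K x \<partial>lborel) = 1"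
    and h_pos: "\<And>n. h n > 0"
    and h_lim: "h \<longlonglongrightarrow> 0"
  defines "c \<equiv> \<lambda>j::nat. (\<integral>s. K s ^ j \<partial>lborel) * (\<integral>y. f y ^ 2 \<partial>lborel)"
    and "d1 \<equiv> (\<integral>x. (f x - (\<integral>y. f y ^ 2 \<partial>lborel))\<^sup>2 * f x \<partial>lborel)"
    and "d2 \<equiv> (\<integral>x. \<integral>t. \<integral>s. K s * K t * K (x + s) * K (x + t) \<partial>lborel \<partial>lborel \<partial>lborel)
               * (\<integral>y. f y ^ 4 \<partial>lborel)"
  shows "((\<lambda>n. \<integral>\<omega>. K ((X 1 \<omega> - X 2 \<omega>) / h n) \<partial>M) \<sim>[sequentially] (\<lambda>n. c 1 * h n)) \<and>
    ((\<lambda>n. \<integral>\<omega>. (g2n M X K f (h n) (X 1 \<omega>) (X 2 \<omega>))\<^sup>2 \<partial>M)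
           \<sim>[sequentially] (\<lambda>n. \<integral>\<omega>. (K ((X 1 \<omega> - X 2 \<omega>) / h n))\<^sup>2 \<partial>M)) \<and>
    ((\<lambda>n. \<integral>\<omega>. (K ((X 1 \<omega> - X 2 \<omega>) / h n))\<^sup>2 \<partial>M) \<sim>[sequentially] (\<lambda>n. c 2 * h n)) \<and>
    ((\<lambda>n. \<integral>\<omega>. (g2n M X K f (h n) (X 1 \<omega>) (X 2 \<omega>)) ^ 4 \<partial>M)
           \<sim>[sequentially] (\<lambda>n. \<integral>\<omega>. (K ((X 1 \<omega> - X 2 \<omega>) / h n)) ^ 4 \<partial>M)) \<and>
    ((\<lambda>n. \<integral>\<omega>. (K ((X 1 \<omega> - X 2 \<omega>) / h n)) ^ 4 \<partial>M) \<sim>[sequentially] (\<lambda>n. c 4 * h n)) \<and>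
    ((\<lambda>n. \<integral>\<omega>. (g1n M X K f (h n) (X 1 \<omega>))\<^sup>2 \<partial>M) \<sim>[sequentially] (\<lambda>n. d1 * (h n)\<^sup>2)) \<and>
    ((\<lambda>n. \<integral>\<omega>. g2n M X K f (h n) (X 1 \<omega>) (X 3 \<omega>) * g2n M X K f (h n) (X 1 \<omega>) (X 4 \<omega>)
                  * g2n M X K f (h n) (X 2 \<omega>) (X 3 \<omega>) * g2n M X K f (h n) (X 2 \<omega>) (X 4 \<omega>) \<partial>M)
           \<sim>[sequentially] (\<lambda>n. d2 * (h n) ^ 3))"
proof -
  interpret iid_kernel M X f K
    by (rule iid_kernel.intro[OF P indep distr f_nonneg f_bdd f_uc K_meas K_nonneg K_bdd K_sym K_int K_one])
  note h = h_pos h_lim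
  have "(\<lambda>n. \<integral>\<omega>. K ((X 1 \<omega> - X 2 \<omega>) / h n) ^ j \<partial>M) \<sim>[sequentially] (\<lambda>n. c j * h n)" if "j > 0" for j
    using expectation_K_power_asymp[OF that h] unfolding c_def .
  from this[of 1] this[of 2] this[of 4]
  have K_moments: "(\<lambda>n. \<integral>\<omega>. K ((X 1 \<omega> - X 2 \<omega>) / h n) \<partial>M) \<sim>[sequentially] (\<lambda>n. c 1 * h n)"
    "(\<lambda>n. \<integral>\<omega>. (K ((X 1 \<omega> - X 2 \<omega>) / h n))\<^sup>2 \<partial>M) \<sim>[sequentially] (\<lambda>n. c 2 * h n)"
    "(\<lambda>n. \<integral>\<omega>. (K ((X 1 \<omega> - X 2 \<omega>) / h n)) ^ 4 \<partial>M) \<sim>[sequentially] (\<lambda>n. c 4 * h n)"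
    by simp_all
  have cycle: "(\<lambda>n. \<integral>\<omega>. g2n M X K f (h n) (X 1 \<omega>) (X 3 \<omega>) * g2n M X K f (h n) (X 1 \<omega>) (X 4 \<omega>)
      * g2n M X K f (h n) (X 2 \<omega>) (X 3 \<omega>) * g2n M X K f (h n) (X 2 \<omega>) (X 4 \<omega>) \<partial>M)
    \<sim>[sequentially] (\<lambda>n. d2 * h n ^ 3)"
    using asymp_equiv_trans[OF expectation_g2n_4cycle_asymp[OF h] expectation_K_4cycle_asymp[OF h]]
    unfolding d2_def integral_K_4cycle_eq .
  show ?thesis
    using K_moments moment_g2n_asymp[of 2, OF _ h] moment_g2n_asymp[of 4, OF _ h]
      second_moment_g1n_asymp[OF h] cycle
    unfolding d1_def by simp
qed

end
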